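(* Let $k\ge1$ and let $\phi=(\phi_1,\dots,\phi_k):\mathbb{D}^k\to\overline{\mathbb{D}}^k$ be an analytic map such that $C_\phi f=f\circ\phi$ maps $A^+(\mathbb{T}^k)$ into itself. Then $C_\phi$ is an isometry of $A^+(\mathbb{T}^k)$ if and only if: (a) for each $1\le i\le k$, $\phi_i=\epsilon_iF_i$, where $\epsilon_i$ is a complex number of modulus $1$, $F_i\in A^+(\mathbb{T}^k)$ has all Taylor coefficients $\widehat{F_i}(\beta)\ge0$, and $F_i(e)=\|F_i\|_\infty=1$, where $e=(1,\dots,1)$; and (b) whenever $\alpha,\alpha'\in\mathbb{N}_0^k$ are distinct, the spectra of $\phi^\alpha$ and $\phi^{\alpha'}$ are disjoint.
   Context: $A^+(\mathbb{T}^k)$ is the algebra of functions $f(z)=\sum_{\alpha\in\mathbb{N}_0^k}\widehat f(\alpha)z^\alpha$ on $\overline{\mathbb{D}}^k$ with $\|f\|_{A^+(\mathbb{T}^k)}=\sum|\widehat f(\alpha)|<\infty$, a Banach algebra under pointwise multiplication. The spectrum of $f$ is $\{\alpha:\widehat f(\alpha)\ne0\}$. For $\alpha\in\mathbb{N}_0^k$, $\phi^\alpha=\phi_1^{\alpha_1}\cdots\phi_k^{\alpha_k}$. $\|F\|_\infty=\sup_{z\in\mathbb{D}^k}|F(z)|$. *)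

theory Defs
  imports "HOL-Analysis.Analysis"
begin

text \<open>Points of \<open>\<complex>^k\<close> are functions \<open>'n \<Rightarrow> complex\<close> for a finite index type \<open>'n\<close>
  (so \<open>k = CARD('n) \<ge> 1\<close>); multi-indices are functions \<open>'n \<Rightarrow> nat\<close>.\<close>

definition monom :: "('n::finite \<Rightarrow> nat) \<Rightarrow> ('n \<Rightarrow> complex) \<Rightarrow> complex" where
  "monom \<alpha> z = (\<Prod>i\<in>UNIV. z i ^ \<alpha> i)"

definition polydisc :: "('n::finite \<Rightarrow> complex) set" where
  "polydisc = {z. \<forall>i. norm (z i) < 1}"

definition series_eval :: "(('n::finite \<Rightarrow> nat) \<Rightarrow> complex) \<Rightarrow> ('n \<Rightarrow> complex) \<Rightarrow> complex" where
  "series_eval c z = infsum (\<lambda>\<alpha>. c \<alpha> * monom \<alpha> z) UNIV"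

definition Aplus_rep :: "(('n::finite \<Rightarrow> complex) \<Rightarrow> complex) \<Rightarrow> (('n \<Rightarrow> nat) \<Rightarrow> complex) \<Rightarrow> bool" where
  "Aplus_rep f c \<longleftrightarrow> (\<lambda>\<alpha>. norm (c \<alpha>)) summable_on UNIV \<and> (\<forall>z\<in>polydisc. series_eval c z = f z)"

definition in_Aplus :: "(('n::finite \<Rightarrow> complex) \<Rightarrow> complex) \<Rightarrow> bool" where
  "in_Aplus f \<longleftrightarrow> (\<exists>c. Aplus_rep f c)"

text \<open>Taylor coefficients (unique for elements of \<open>A^+\<close>).\<close>
definition Aplus_coeff :: "(('n::finite \<Rightarrow> complex) \<Rightarrow> complex) \<Rightarrow> ('n \<Rightarrow> nat) \<Rightarrow> complex" where
  "Aplus_coeff f = (THE c. Aplus_rep f c)"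

definition Aplus_norm :: "(('n::finite \<Rightarrow> complex) \<Rightarrow> complex) \<Rightarrow> real" where
  "Aplus_norm f = infsum (\<lambda>\<alpha>. norm (Aplus_coeff f \<alpha>)) UNIV"

definition spectrum_Aplus :: "(('n::finite \<Rightarrow> complex) \<Rightarrow> complex) \<Rightarrow> ('n \<Rightarrow> nat) set" where
  "spectrum_Aplus f = {\<alpha>. Aplus_coeff f \<alpha> \<noteq> 0}"

text \<open>Extension of an element of \<open>A^+\<close> to the closed polydisc (sum of its series).\<close>
definition Aplus_ext :: "(('n::finite \<Rightarrow> complex) \<Rightarrow> complex) \<Rightarrow> ('n \<Rightarrow> complex) \<Rightarrow> complex" where
  "Aplus_ext f z = series_eval (Aplus_coeff f) z"

definition comp_op :: "('n::finite \<Rightarrow> ('n \<Rightarrow> complex) \<Rightarrow> complex) \<Rightarrow> (('n \<Rightarrow> complex) \<Rightarrow> complex)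
    \<Rightarrow> ('n \<Rightarrow> complex) \<Rightarrow> complex" where
  "comp_op \<phi> f = (\<lambda>z. Aplus_ext f (\<lambda>i. \<phi> i z))"

text \<open>Holomorphy on the open polydisc (Osgood: continuous and holomorphic in each variable).\<close>
definition analytic_polydisc :: "(('n::finite \<Rightarrow> complex) \<Rightarrow> complex) \<Rightarrow> bool" where
  "analytic_polydisc f \<longleftrightarrow> continuous_on polydisc f \<and>
     (\<forall>z\<in>polydisc. \<forall>i. (\<lambda>w. f (z(i := w))) field_differentiable at (z i))"

end

theory Submission
  imports Defs
begin

text \<open>Write \<open>c\<^sup>\<alpha>\<close> for the Taylor coefficients of \<open>\<phi>\<^sup>\<alpha> = C\<^sub>\<phi> z\<^sup>\<alpha>\<close>.
  If \<open>C\<^sub>\<phi>\<close> is an isometry, testing it on \<open>z\<^sup>\<alpha>\<close> and on \<open>z\<^sup>\<alpha> \<plusminus> z\<^sup>\<alpha>\<^sup>'\<close> shows that every \<open>c\<^sup>\<alpha>\<close> has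
  \<open>\<ell>\<^sup>1\<close> norm 1 and that \<open>c\<^sup>\<alpha>\<close>, \<open>c\<^sup>\<alpha>\<^sup>'\<close> have disjoint supports for \<open>\<alpha> \<noteq> \<alpha>'\<close>; this is (b).
  Since the norm is then multiplicative on these coefficient families, their Cauchy products
  have no cancellation, so the spectrum of \<open>\<phi>\<^sup>\<alpha>\<^sup>+\<^sup>\<beta>\<close> contains the sumset of the spectra of
  \<open>\<phi>\<^sup>\<alpha>\<close> and \<open>\<phi>\<^sup>\<beta>\<close>. Were there two points in the spectrum of some \<open>\<phi>\<^sub>i\<close>, the pairwise
  disjoint spectra of the \<open>\<phi>\<^sup>\<alpha>\<close> would then contain more points than a box of linear size
  can hold; hence each \<open>\<phi>\<^sub>i\<close> is a unimodular multiple of a monomial, which gives (a).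

  Conversely, under (a) the coefficients of \<open>\<phi>\<^sup>\<alpha> = \<epsilon>\<^sup>\<alpha> F\<^sup>\<alpha>\<close> are \<open>\<epsilon>\<^sup>\<alpha>\<close> times nonnegative
  numbers summing to \<open>F(e)\<^sup>|\<^sup>\<alpha>\<^sup>| = 1\<close>, and by (b) no cancellation occurs in
  \<open>f \<circ> \<phi> = \<Sum>\<^sub>\<alpha> \<hat>f(\<alpha>) \<phi>\<^sup>\<alpha>\<close>, so \<open>\<parallel>f \<circ> \<phi>\<parallel> = \<Sum>\<^sub>\<alpha> |\<hat>f(\<alpha>)| = \<parallel>f\<parallel>\<close>.\<close>

definition closed_polydisc :: "('n::finite \<Rightarrow> complex) set" where
  "closed_polydisc = {z. \<forall>i. norm (z i) \<le> 1}"

definition unit_index :: "'n \<Rightarrow> 'n \<Rightarrow> nat" where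
  "unit_index i = (\<lambda>j. if j = i then 1 else 0)"

lemma polydisc_imp_closed_polydisc: "z \<in> polydisc \<Longrightarrow> z \<in> closed_polydisc"
  by (auto simp: polydisc_def closed_polydisc_def less_imp_le)

lemma monom_zero [simp]: "monom (\<lambda>_. 0) z = 1"
  by (simp add: monom_def)

lemma monom_one [simp]: "monom \<alpha> (\<lambda>_. 1) = 1"
  by (simp add: monom_def)

lemma monom_add: "monom (\<lambda>i. \<alpha> i + \<beta> i) z = monom \<alpha> z * monom \<beta> z"
  by (simp add: monom_def power_add prod.distrib)

lemma monom_unit_index: "monom (unit_index i) z = z i"
proof -
  have "monom (unit_index i) z = (\<Prod>j\<in>UNIV. if j = i then z j else 1)"
    unfolding monom_def unit_index_def by (rule prod.cong) auto
  also have "\<dots> = z i" by (simp add: prod.delta)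
  finally show ?thesis .
qed

lemma norm_monom: "norm (monom \<alpha> z) = (\<Prod>i\<in>UNIV. norm (z i) ^ \<alpha> i)"
  unfolding monom_def prod_norm[symmetric] by (simp add: norm_power)

lemma norm_monom_le_1: "z \<in> closed_polydisc \<Longrightarrow> norm (monom \<alpha> z) \<le> 1"
  unfolding norm_monom closed_polydisc_def by (auto intro!: prod_le_1 power_le_one)

lemma monom_split_coordinate: "monom \<alpha> z = z i ^ \<alpha> i * monom (\<alpha>(i := 0)) z"
proof -
  have "monom (\<alpha>(i := 0)) z = (\<Prod>j\<in>UNIV-{i}. z j ^ (\<alpha>(i := 0)) j)"
    unfolding monom_def by (subst prod.remove[of _ i]) auto
  also have "\<dots> = (\<Prod>j\<in>UNIV-{i}. z j ^ \<alpha> j)"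
    by (rule prod.cong) auto
  finally show ?thesis
    unfolding monom_def by (simp add: prod.remove[of UNIV i])
qed

lemma monom_upd_zero_fun_upd: "monom (\<alpha>(i := 0)) (z(i := w)) = monom (\<alpha>(i := 0)) z"
  unfolding monom_def by (rule prod.cong) auto

lemma sup_norm_monom: "(SUP z\<in>polydisc. norm (monom \<alpha> z)) = 1"
proof -
  define m where "m = (\<Sum>k\<in>UNIV. \<alpha> k)"
  have diag: "(\<lambda>_. complex_of_real t) \<in> polydisc" "norm (monom \<alpha> (\<lambda>_. complex_of_real t)) = t ^ m"
    if "0 \<le> t" "t < 1" for t
    using that by (simp_all add: polydisc_def norm_monom m_def power_sum)
  have le1: "norm (monom \<alpha> z) \<le> 1" if "z \<in> polydisc" for z
    using norm_monom_le_1[OF polydisc_imp_closed_polydisc[OF that]] .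
  then have bdd: "bdd_above ((\<lambda>z. norm (monom \<alpha> z)) ` polydisc)"
    by (meson bdd_aboveI2)
  define S where "S = (SUP z\<in>polydisc. norm (monom \<alpha> z))"
  have below_S: "t ^ m \<le> S" if "0 \<le> t" "t < 1" for t
    unfolding S_def using cSUP_upper[OF diag(1)[OF that] bdd] diag(2)[OF that] by simp
  have "S \<le> 1"
    unfolding S_def using diag(1)[of 0] by (intro cSUP_least le1) auto
  moreover have "1 \<le> S"
  proof (rule ccontr)
    assume "\<not> 1 \<le> S"
    then have S1: "S < 1" by simp
    have S0: "0 \<le> S" using below_S[of 0] by (cases m) auto
    define \<delta> where "\<delta> = (1 - S) / (2 * (real m + 1))"
    have \<delta>: "0 < \<delta>" "\<delta> \<le> 1/2" using S1 S0 by (auto simp: \<delta>_def field_simps)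
    have "1 + real m * (- \<delta>) \<le> (1 + (- \<delta>)) ^ m"
      by (rule Bernoulli_inequality) (use \<delta> in auto)
    also have "\<dots> \<le> S" using below_S[of "1 - \<delta>"] \<delta> by simp
    finally have "1 - real m * \<delta> \<le> S" by simp
    moreover have "real m * \<delta> < 1 - S"
    proof -
      have "real m * \<delta> = (1 - S) * (real m / (2 * (real m + 1)))" by (simp add: \<delta>_def field_simps)
      also have "\<dots> < (1 - S) * 1"
        by (rule mult_strict_left_mono) (use S1 in \<open>auto simp: field_simps\<close>)
      finally show ?thesis by simp
    qed
    ultimately show False by simp
  qed
  ultimately show ?thesis unfolding S_def by simp
qed

abbreviation abs_summable :: "('a \<Rightarrow> 'b::real_normed_vector) \<Rightarrow> bool" where
  "abs_summable c \<equiv> (\<lambda>x. norm (c x)) summable_on UNIV"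

lemma infsum_eq_single:
  assumes "\<And>x. x \<noteq> a \<Longrightarrow> f x = 0"
  shows "infsum f UNIV = f a"
proof -
  have "infsum f UNIV = infsum f {a}"
    by (rule infsum_cong_neutral) (use assms in auto)
  then show ?thesis by simp
qed

lemma summable_on_single:
  assumes "\<And>x. x \<noteq> a \<Longrightarrow> f x = 0"
  shows "f summable_on UNIV"
proof -
  have "f summable_on {a}" by simp
  then show ?thesis
    by (rule summable_on_cong_neutral[THEN iffD1, rotated -1]) (use assms in auto)
qed

lemma infsum_eq_two:
  assumes "a \<noteq> b" "\<And>x. x \<noteq> a \<Longrightarrow> x \<noteq> b \<Longrightarrow> f x = 0"
  shows "infsum f UNIV = f a + f b"
proof -
  have "infsum f UNIV = infsum f {a, b}"
    by (rule infsum_cong_neutral) (use assms in auto)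
  then show ?thesis using assms by simp
qed

lemma
  fixes f g :: "'a \<Rightarrow> 'b::{topological_ab_group_add,t2_space}"
  assumes "f summable_on A" "g summable_on A"
  shows summable_on_diff: "(\<lambda>x. f x - g x) summable_on A"
    and infsum_diff: "infsum (\<lambda>x. f x - g x) A = infsum f A - infsum g A"
proof -
  have u: "(\<lambda>x. - g x) summable_on A" using summable_on_uminus assms(2) by blast
  show "(\<lambda>x. f x - g x) summable_on A"
    using summable_on_add[OF assms(1) u] by simp
  show "infsum (\<lambda>x. f x - g x) A = infsum f A - infsum g A"
    using infsum_add[OF assms(1) u] infsum_uminus[of g A] by simp
qed

lemma eq_if_le_and_infsum_eq:
  fixes f g :: "'a \<Rightarrow> real"
  assumes "f summable_on UNIV" "g summable_on UNIV" "infsum f UNIV = infsum g UNIV"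
    and "\<And>x. g x \<le> f x"
  shows "f x = g x"
proof -
  have "(\<lambda>x. f x - g x) x = 0"
    using summable_on_diff[OF assms(1,2)] infsum_diff[OF assms(1,2)] assms(3,4)
    by (intro nonneg_infsum_le_0D[of "\<lambda>x. f x - g x" UNIV]) auto
  then show ?thesis by simp
qed

lemma abs_summable_monom_terms:
  assumes "abs_summable c" "z \<in> closed_polydisc"
  shows "abs_summable (\<lambda>\<alpha>. c \<alpha> * monom \<alpha> z)"
proof (rule Infinite_Sum.abs_summable_on_comparison_test[OF assms(1)])
  fix \<alpha> :: "'a \<Rightarrow> nat"
  show "norm (c \<alpha> * monom \<alpha> z) \<le> norm (c \<alpha>)"
    using norm_monom_le_1[OF assms(2), of \<alpha>] by (simp add: norm_mult mult_left_le)
qed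

lemma summable_monom_terms:
  "abs_summable c \<Longrightarrow> z \<in> closed_polydisc \<Longrightarrow> (\<lambda>\<alpha>. c \<alpha> * monom \<alpha> z) summable_on UNIV"
  by (rule abs_summable_summable) (rule abs_summable_monom_terms)

lemma norm_series_eval_le:
  assumes "abs_summable c" "z \<in> closed_polydisc"
  shows "norm (series_eval c z) \<le> infsum (\<lambda>\<alpha>. norm (c \<alpha>)) UNIV"
proof -
  have "norm (series_eval c z) \<le> infsum (\<lambda>\<alpha>. norm (c \<alpha> * monom \<alpha> z)) UNIV"
    unfolding series_eval_def by (rule norm_infsum_bound) (rule abs_summable_monom_terms[OF assms])
  also have "\<dots> \<le> infsum (\<lambda>\<alpha>. norm (c \<alpha>)) UNIV"
    using norm_monom_le_1[OF assms(2)]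
    by (intro infsum_mono[OF abs_summable_monom_terms[OF assms] assms(1)])
       (simp add: norm_mult mult_left_le)
  finally show ?thesis .
qed

lemma series_eval_one: "series_eval c (\<lambda>_. 1) = infsum c UNIV"
  by (simp add: series_eval_def)

definition monom_coeffs :: "('n \<Rightarrow> nat) \<Rightarrow> ('n \<Rightarrow> nat) \<Rightarrow> complex" where
  "monom_coeffs \<alpha> \<beta> = (if \<beta> = \<alpha> then 1 else 0)"

lemma abs_summable_monom_coeffs: "abs_summable (monom_coeffs \<alpha>)"
  by (rule summable_on_single[where a=\<alpha>]) (simp add: monom_coeffs_def)

lemma series_eval_monom_coeffs: "series_eval (monom_coeffs \<alpha>) z = monom \<alpha> z"
  unfolding series_eval_def by (subst infsum_eq_single[where a=\<alpha>]) (auto simp: monom_coeffs_def)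

lemma infsum_norm_monom_coeffs: "infsum (\<lambda>\<beta>. norm (monom_coeffs \<alpha> \<beta>)) UNIV = 1"
  by (subst infsum_eq_single[where a=\<alpha>]) (auto simp: monom_coeffs_def)

lemma Aplus_rep_cong:
  "Aplus_rep f c \<Longrightarrow> (\<And>z. z \<in> polydisc \<Longrightarrow> f z = g z) \<Longrightarrow> Aplus_rep g c"
  by (simp add: Aplus_rep_def)

lemma Aplus_rep_abs_summable: "Aplus_rep f c \<Longrightarrow> abs_summable c"
  by (simp add: Aplus_rep_def)

lemma Aplus_rep_add:
  assumes "Aplus_rep f c" "Aplus_rep g d"
  shows "Aplus_rep (\<lambda>z. f z + g z) (\<lambda>\<alpha>. c \<alpha> + d \<alpha>)"
  unfolding Aplus_rep_def
proof (intro conjI ballI)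
  have s: "abs_summable c" "abs_summable d"
    using assms by (auto simp: Aplus_rep_def)
  show "abs_summable (\<lambda>\<alpha>. c \<alpha> + d \<alpha>)"
    using s by (intro Infinite_Sum.abs_summable_on_comparison_test'[of "\<lambda>\<alpha>. norm (c \<alpha>) + norm (d \<alpha>)"])
       (auto intro: summable_on_add norm_triangle_ineq)
  fix z :: "'a \<Rightarrow> complex" assume z: "z \<in> polydisc"
  have "series_eval (\<lambda>\<alpha>. c \<alpha> + d \<alpha>) z = series_eval c z + series_eval d z"
    unfolding series_eval_def distrib_right
    by (rule infsum_add; rule summable_monom_terms) (use s polydisc_imp_closed_polydisc[OF z] in auto)
  then show "series_eval (\<lambda>\<alpha>. c \<alpha> + d \<alpha>) z = f z + g z"
    using assms z by (simp add: Aplus_rep_def)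
qed

lemma Aplus_rep_scale:
  assumes "Aplus_rep f c"
  shows "Aplus_rep (\<lambda>z. a * f z) (\<lambda>\<alpha>. a * c \<alpha>)"
  unfolding Aplus_rep_def
proof (intro conjI ballI)
  have s: "abs_summable c" using assms by (auto simp: Aplus_rep_def)
  show "abs_summable (\<lambda>\<alpha>. a * c \<alpha>)"
    using summable_on_cmult_right[OF s, of "norm a"] by (simp add: norm_mult)
  fix z :: "'a \<Rightarrow> complex" assume z: "z \<in> polydisc"
  have "series_eval (\<lambda>\<alpha>. a * c \<alpha>) z = a * series_eval c z"
    unfolding series_eval_def mult.assoc
    by (rule infsum_cmult_right) (rule summable_monom_terms[OF s polydisc_imp_closed_polydisc[OF z]])
  then show "series_eval (\<lambda>\<alpha>. a * c \<alpha>) z = a * f z"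
    using assms z by (simp add: Aplus_rep_def)
qed

lemma Aplus_rep_monom: "Aplus_rep (monom \<alpha>) (monom_coeffs \<alpha>)"
  unfolding Aplus_rep_def by (intro conjI ballI abs_summable_monom_coeffs series_eval_monom_coeffs)

section \<open>Uniqueness of Taylor coefficients\<close>

lemma norm_lowest_coeff_le:
  fixes b :: "nat \<Rightarrow> complex" and t :: real
  assumes b: "abs_summable b" and below: "\<And>m. m < n \<Longrightarrow> b m = 0"
    and t: "0 < t" "t < 1" and vanishes: "infsum (\<lambda>m. b m * of_real t ^ m) UNIV = 0"
  shows "norm (b n) \<le> t * infsum (\<lambda>m. norm (b m)) UNIV"
proof -
  have terms: "(\<lambda>m. norm (b m * of_real t ^ m)) summable_on A" for A
    by (rule summable_on_subset_banach[of _ UNIV], rule Infinite_Sum.abs_summable_on_comparison_test[OF b])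
       (use t in \<open>auto simp: norm_mult norm_power mult_left_le power_le_one\<close>)
  have coeffs: "(\<lambda>m. norm (b m)) summable_on A" for A
    by (rule summable_on_subset_banach[OF b]) auto
  have "0 = infsum (\<lambda>m. b m * of_real t ^ m) UNIV"
    using vanishes by simp
  also have "\<dots> = infsum (\<lambda>m. b m * of_real t ^ m) (insert n {n<..})"
    by (rule infsum_cong_neutral) (use below in \<open>auto simp: not_less\<close>)
  also have "\<dots> = b n * of_real t ^ n + infsum (\<lambda>m. b m * of_real t ^ m) {n<..}"
    by (rule infsum_insert) (auto intro: abs_summable_summable terms)
  finally have "b n * of_real t ^ n = - infsum (\<lambda>m. b m * of_real t ^ m) {n<..}"
    by (simp add: eq_neg_iff_add_eq_0 add.commute)
  then have "norm (b n) * t ^ n = norm (infsum (\<lambda>m. b m * of_real t ^ m) {n<..})"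
    using t by (metis abs_of_pos norm_minus_cancel norm_mult norm_of_real norm_power)
  also have "\<dots> \<le> infsum (\<lambda>m. norm (b m * of_real t ^ m)) {n<..}"
    by (rule norm_infsum_bound) (rule terms)
  also have "\<dots> \<le> infsum (\<lambda>m. norm (b m) * t ^ Suc n) {n<..}"
  proof (rule infsum_mono[OF terms summable_on_cmult_left[OF coeffs]])
    fix m assume "m \<in> {n<..}"
    then have "t ^ m \<le> t ^ Suc n" using t by (intro power_decreasing) auto
    then show "norm (b m * of_real t ^ m) \<le> norm (b m) * t ^ Suc n"
      using t by (simp add: norm_mult norm_power mult_left_mono)
  qed
  also have "\<dots> = infsum (\<lambda>m. norm (b m)) {n<..} * t ^ Suc n"
    by (rule infsum_cmult_left) (rule coeffs)
  also have "\<dots> \<le> infsum (\<lambda>m. norm (b m)) UNIV * t ^ Suc n"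
    using t by (intro mult_right_mono infsum_mono_neutral) (auto intro: coeffs)
  finally have "norm (b n) * t ^ n \<le> (t * infsum (\<lambda>m. norm (b m)) UNIV) * t ^ n"
    by (simp add: algebra_simps)
  then show ?thesis using t by simp
qed

lemma power_series_coeffs_eq_0:
  fixes b :: "nat \<Rightarrow> complex"
  assumes b: "abs_summable b"
    and vanishes: "\<And>t::real. 0 < t \<Longrightarrow> t < 1 \<Longrightarrow> infsum (\<lambda>n. b n * of_real t ^ n) UNIV = 0"
  shows "b n = 0"
proof (induction n rule: less_induct)
  case (less n)
  define B where "B = infsum (\<lambda>m. norm (b m)) UNIV"
  have B: "B \<ge> 0" unfolding B_def by (rule infsum_nonneg) auto
  show ?case
  proof (rule ccontr)
    assume "b n \<noteq> 0"
    then have bn: "norm (b n) > 0" by simp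
    define t where "t = min (1/2) (norm (b n) / (2 * (B + 1)))"
    have t: "0 < t" "t < 1" using bn B by (auto simp: t_def)
    have "t * B \<le> norm (b n) / (2 * (B + 1)) * B"
      using B t by (intro mult_right_mono) (auto simp: t_def)
    also have "\<dots> < norm (b n)"
      using bn B by (simp add: field_simps add_nonneg_pos)
    finally have "t * B < norm (b n)" .
    moreover have "norm (b n) \<le> t * B"
      unfolding B_def by (rule norm_lowest_coeff_le[OF b _ t vanishes[OF t]]) (rule less)
    ultimately show False by simp
  qed
qed

lemma infsum_split_coordinate:
  fixes g :: "('n \<Rightarrow> nat) \<Rightarrow> 'b::banach"
  assumes g: "g summable_on UNIV"
  shows "(\<lambda>m. infsum (\<lambda>\<beta>. g (\<beta>(i := m))) {\<beta>. \<beta> i = 0}) summable_on UNIV"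
    and "infsum g UNIV = infsum (\<lambda>m. infsum (\<lambda>\<beta>. g (\<beta>(i := m))) {\<beta>. \<beta> i = 0}) UNIV"
proof -
  let ?Z = "{\<beta>. \<beta> i = 0}" and ?join = "\<lambda>(m, \<beta>). \<beta>(i := m)" and ?split = "\<lambda>\<alpha>. (\<alpha> i, \<alpha>(i := 0))"
  have bij: "\<And>a. ?join (?split a) = a" "\<And>a. ?split a \<in> UNIV \<times> ?Z"
    "\<And>b. b \<in> UNIV \<times> ?Z \<Longrightarrow> ?split (?join b) = b" "\<And>b. ?join b \<in> UNIV"
    by (auto simp: fun_upd_idem)
  have sum: "(\<lambda>(m, \<beta>). g (\<beta>(i := m))) summable_on UNIV \<times> ?Z"
    using summable_on_reindex_bij_witness[of UNIV ?join ?split "UNIV \<times> ?Z" "\<lambda>(m, \<beta>). g (\<beta>(i := m))" g]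
      bij g by auto
  have eq: "infsum g UNIV = infsum (\<lambda>(m, \<beta>). g (\<beta>(i := m))) (UNIV \<times> ?Z)"
    by (rule infsum_reindex_bij_witness[of UNIV ?join ?split]) (use bij in auto)
  show "(\<lambda>m. infsum (\<lambda>\<beta>. g (\<beta>(i := m))) ?Z) summable_on UNIV"
    using summable_on_Sigma_banach[of "\<lambda>m \<beta>. g (\<beta>(i := m))" UNIV "\<lambda>_. ?Z"] sum by simp
  show "infsum g UNIV = infsum (\<lambda>m. infsum (\<lambda>\<beta>. g (\<beta>(i := m))) ?Z) UNIV"
    using infsum_Sigma'_banach[of "\<lambda>m \<beta>. g (\<beta>(i := m))" UNIV "\<lambda>_. ?Z"] sum eq by simp
qed

text \<open>The coefficients of \<open>z\<^sub>i\<^sup>m\<close> in a series, as a series in the remaining variables.\<close>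

definition coeff_slice ::
    "(('n \<Rightarrow> nat) \<Rightarrow> complex) \<Rightarrow> 'n \<Rightarrow> nat \<Rightarrow> ('n \<Rightarrow> nat) \<Rightarrow> complex" where
  "coeff_slice c i m \<beta> = (if \<beta> i = 0 then c (\<beta>(i := m)) else 0)"

lemma infsum_coeff_slice:
  "infsum (\<lambda>\<beta>. g (coeff_slice c i m \<beta>) \<beta>) UNIV = infsum (\<lambda>\<beta>. g (c (\<beta>(i := m))) \<beta>) {\<beta>. \<beta> i = 0}"
  if "\<And>\<beta>. g 0 \<beta> = 0" for g :: "complex \<Rightarrow> ('n \<Rightarrow> nat) \<Rightarrow> 'b::banach"
  by (rule infsum_cong_neutral) (auto simp: coeff_slice_def that)

lemma abs_summable_coeff_slice:
  assumes c: "abs_summable c"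
  shows "abs_summable (coeff_slice c i m)"
proof -
  have inj: "inj_on (\<lambda>\<beta>. \<beta>(i := m)) {\<beta>. \<beta> i = 0}"
    by (rule inj_onI) (auto simp: fun_eq_iff split: if_splits, metis)
  have "(\<lambda>\<alpha>. norm (c \<alpha>)) summable_on (\<lambda>\<beta>. \<beta>(i := m)) ` {\<beta>. \<beta> i = 0}"
    by (rule summable_on_subset_banach[OF c]) auto
  then have "(\<lambda>\<beta>. norm (c (\<beta>(i := m)))) summable_on {\<beta>. \<beta> i = 0}"
    using summable_on_reindex[OF inj, of "\<lambda>\<alpha>. norm (c \<alpha>)"] by (simp add: o_def)
  then show ?thesis
    by (rule summable_on_cong_neutral[THEN iffD1, rotated -1]) (auto simp: coeff_slice_def)
qed

lemma series_eval_fun_upd: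
  assumes c: "abs_summable c" and w: "w \<in> polydisc" and t: "norm t < 1"
  shows "series_eval c (w(i := t)) = infsum (\<lambda>m. series_eval (coeff_slice c i m) w * t ^ m) UNIV"
proof -
  have wt: "w(i := t) \<in> closed_polydisc"
    using w t by (auto simp: polydisc_def closed_polydisc_def less_imp_le)
  have "series_eval c (w(i := t))
      = infsum (\<lambda>m. infsum (\<lambda>\<beta>. c (\<beta>(i := m)) * monom (\<beta>(i := m)) (w(i := t))) {\<beta>. \<beta> i = 0}) UNIV"
    unfolding series_eval_def by (rule infsum_split_coordinate(2)[OF summable_monom_terms[OF c wt]])
  also have "\<dots> = infsum (\<lambda>m. series_eval (coeff_slice c i m) w * t ^ m) UNIV"
  proof (rule infsum_cong)
    fix m
    have "monom (\<beta>(i := m)) (w(i := t)) = t ^ m * monom \<beta> w" if "\<beta> i = 0" for \<beta>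
      using monom_split_coordinate[of "\<beta>(i := m)" "w(i := t)" i] monom_upd_zero_fun_upd[of \<beta> i w t] that
      by (simp add: fun_upd_idem)
    then have "infsum (\<lambda>\<beta>. c (\<beta>(i := m)) * monom (\<beta>(i := m)) (w(i := t))) {\<beta>. \<beta> i = 0}
        = infsum (\<lambda>\<beta>. t ^ m * (c (\<beta>(i := m)) * monom \<beta> w)) {\<beta>. \<beta> i = 0}"
      by (intro infsum_cong) simp
    also have "\<dots> = t ^ m * series_eval (coeff_slice c i m) w"
      unfolding series_eval_def infsum_cmult_right'
      by (subst infsum_coeff_slice[of "\<lambda>a \<beta>. a * monom \<beta> w"]) simp_all
    finally show "infsum (\<lambda>\<beta>. c (\<beta>(i := m)) * monom (\<beta>(i := m)) (w(i := t))) {\<beta>. \<beta> i = 0}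
        = series_eval (coeff_slice c i m) w * t ^ m"
      by simp
  qed
  finally show ?thesis .
qed

lemma abs_summable_series_eval_slices:
  assumes c: "abs_summable c" and w: "w \<in> closed_polydisc"
  shows "abs_summable (\<lambda>m. series_eval (coeff_slice c i m) w)"
proof (rule Infinite_Sum.abs_summable_on_comparison_test')
  show "(\<lambda>m. infsum (\<lambda>\<beta>. norm (c (\<beta>(i := m)))) {\<beta>. \<beta> i = 0}) summable_on UNIV"
    using infsum_split_coordinate(1)[of "\<lambda>\<alpha>. norm (c \<alpha>)" i] c by simp
  fix m
  have "norm (series_eval (coeff_slice c i m) w) \<le> infsum (\<lambda>\<beta>. norm (coeff_slice c i m \<beta>)) UNIV"
    by (rule norm_series_eval_le[OF abs_summable_coeff_slice[OF c] w])
  also have "\<dots> = infsum (\<lambda>\<beta>. norm (c (\<beta>(i := m)))) {\<beta>. \<beta> i = 0}"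
    by (subst infsum_coeff_slice[of "\<lambda>a _. norm a"]) simp_all
  finally show "norm (series_eval (coeff_slice c i m) w)
      \<le> infsum (\<lambda>\<beta>. norm (c (\<beta>(i := m)))) {\<beta>. \<beta> i = 0}" .
qed

lemma series_eval_slices_eq_0:
  assumes c: "abs_summable c" and vanishes: "\<And>z. z \<in> polydisc \<Longrightarrow> series_eval c z = 0"
    and w: "w \<in> polydisc"
  shows "series_eval (coeff_slice c i m) w = 0"
proof (rule power_series_coeffs_eq_0)
  show "abs_summable (\<lambda>m. series_eval (coeff_slice c i m) w)"
    by (rule abs_summable_series_eval_slices[OF c polydisc_imp_closed_polydisc[OF w]])
  fix t :: real assume t: "0 < t" "t < 1"
  have "w(i := of_real t) \<in> polydisc" using w t by (auto simp: polydisc_def)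
  then show "infsum (\<lambda>m. series_eval (coeff_slice c i m) w * of_real t ^ m) UNIV = 0"
    using vanishes series_eval_fun_upd[OF c w, of "of_real t" i] t by simp
qed

text \<open>Generalised to coefficients supported on the variables in \<open>I\<close>, for an induction on \<open>I\<close>.\<close>

lemma coeffs_eq_0_if_supported_on:
  assumes "finite I" and supp: "\<And>\<alpha> j. c \<alpha> \<noteq> 0 \<Longrightarrow> j \<notin> I \<Longrightarrow> \<alpha> j = 0"
    and c: "abs_summable c" and vanishes: "\<And>z. z \<in> polydisc \<Longrightarrow> series_eval c z = 0"
  shows "c \<alpha> = 0"
  using assms
proof (induction I arbitrary: c \<alpha> rule: finite_induct)
  case empty
  then have only0: "\<And>\<beta>. \<beta> \<noteq> (\<lambda>_. 0) \<Longrightarrow> c \<beta> = 0" by auto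
  have "(\<lambda>_. 0) \<in> (polydisc :: ('a \<Rightarrow> complex) set)" by (simp add: polydisc_def)
  then have "c (\<lambda>_. 0) = 0"
    using empty.prems(3) unfolding series_eval_def
    by (subst (asm) infsum_eq_single[where a="\<lambda>_. 0"]) (auto simp: only0)
  then show ?case using only0 by (cases "\<alpha> = (\<lambda>_. 0)") auto
next
  case (insert i I)
  have "coeff_slice c i m \<beta> = 0" for m \<beta>
  proof (rule insert.IH)
    show "\<beta> j = 0" if \<beta>: "coeff_slice c i m \<beta> \<noteq> 0" and j: "j \<notin> I" for \<beta> j
    proof (cases "j = i")
      case True
      with \<beta> show ?thesis by (simp add: coeff_slice_def split: if_splits)
    next
      case False
      with \<beta> have "c (\<beta>(i := m)) \<noteq> 0" by (simp add: coeff_slice_def split: if_splits)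
      from insert.prems(1)[OF this, of j] j False show ?thesis by simp
    qed
    show "abs_summable (coeff_slice c i m)"
      by (rule abs_summable_coeff_slice[OF insert.prems(2)])
    show "series_eval (coeff_slice c i m) z = 0" if "z \<in> polydisc" for z
      by (rule series_eval_slices_eq_0[OF insert.prems(2,3) that])
  qed
  from this[of "\<alpha> i" "\<alpha>(i := 0)"] show "c \<alpha> = 0" by (simp add: coeff_slice_def)
qed

lemma coeffs_eq_0_if_series_eval_eq_0:
  fixes c :: "('n::finite \<Rightarrow> nat) \<Rightarrow> complex"
  assumes "abs_summable c" "\<And>z. z \<in> polydisc \<Longrightarrow> series_eval c z = 0"
  shows "c \<alpha> = 0"
  using coeffs_eq_0_if_supported_on[of UNIV c \<alpha>] assms by simp

lemma Aplus_rep_unique: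
  assumes "Aplus_rep f c" "Aplus_rep f d"
  shows "c = d"
proof
  fix \<alpha>
  have diff: "Aplus_rep (\<lambda>z. f z + (-1) * f z) (\<lambda>\<alpha>. c \<alpha> + (-1) * d \<alpha>)"
    by (rule Aplus_rep_add[OF assms(1) Aplus_rep_scale[OF assms(2)]])
  have "c \<alpha> + (-1) * d \<alpha> = 0"
    by (rule coeffs_eq_0_if_series_eval_eq_0[where c="\<lambda>\<alpha>. c \<alpha> + (-1) * d \<alpha>"])
       (use diff in \<open>auto simp: Aplus_rep_def\<close>)
  then show "c \<alpha> = d \<alpha>" by simp
qed

lemma Aplus_coeff_eq: "Aplus_rep f c \<Longrightarrow> Aplus_coeff f = c"
  unfolding Aplus_coeff_def by (rule the_equality) (auto intro: Aplus_rep_unique)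

lemma Aplus_rep_Aplus_coeff: "in_Aplus f \<Longrightarrow> Aplus_rep f (Aplus_coeff f)"
  unfolding in_Aplus_def using Aplus_coeff_eq by auto

lemma Aplus_norm_eq: "Aplus_rep f c \<Longrightarrow> Aplus_norm f = infsum (\<lambda>\<alpha>. norm (c \<alpha>)) UNIV"
  by (simp add: Aplus_norm_def Aplus_coeff_eq)

lemma in_Aplus_monom: "in_Aplus (monom \<alpha>)"
  using Aplus_rep_monom by (auto simp: in_Aplus_def)

lemma Aplus_coeff_monom: "Aplus_coeff (monom \<alpha>) = monom_coeffs \<alpha>"
  by (rule Aplus_coeff_eq[OF Aplus_rep_monom])

lemma Aplus_norm_monom: "Aplus_norm (monom \<alpha>) = 1"
  by (simp add: Aplus_norm_eq[OF Aplus_rep_monom] infsum_norm_monom_coeffs)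

lemma Aplus_ext_monom: "Aplus_ext (monom \<alpha>) = monom \<alpha>"
  by (simp add: Aplus_ext_def Aplus_coeff_monom series_eval_monom_coeffs fun_eq_iff)

section \<open>Cauchy products of coefficient families\<close>

lemma
  fixes f :: "'a \<Rightarrow> 'c::{real_normed_div_algebra,banach}" and g :: "'b \<Rightarrow> 'c"
  assumes f: "abs_summable f" and g: "abs_summable g"
  shows abs_summable_mult_pair: "(\<lambda>(x, y). norm (f x * g y)) summable_on UNIV \<times> UNIV"
    and infsum_mult_pair: "infsum (\<lambda>(x, y). f x * g y) (UNIV \<times> UNIV) = infsum f UNIV * infsum g UNIV"
proof -
  have inner: "infsum (\<lambda>y. norm (f x * g y)) UNIV = norm (f x) * infsum (\<lambda>y. norm (g y)) UNIV" for x
    by (simp add: norm_mult infsum_cmult_right')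
  have abs: "(\<lambda>p. norm ((\<lambda>(x, y). f x * g y) p)) summable_on Sigma UNIV (\<lambda>_. UNIV)"
  proof (rule Infinite_Sum.abs_summable_on_Sigma_iff[THEN iffD2], intro conjI ballI)
    show "(\<lambda>y. norm ((\<lambda>(x, y). f x * g y) (x, y))) summable_on UNIV" for x
      using summable_on_cmult_right[OF g, of "norm (f x)"] by (simp add: norm_mult)
    have "infsum (\<lambda>y. norm (g y)) UNIV \<ge> 0" by (rule infsum_nonneg) auto
    then have "(\<lambda>x. norm (infsum (\<lambda>y. norm ((\<lambda>(x, y). f x * g y) (x, y))) UNIV))
        = (\<lambda>x. norm (f x) * infsum (\<lambda>y. norm (g y)) UNIV)"
      by (simp add: inner)
    then show "(\<lambda>x. norm (infsum (\<lambda>y. norm ((\<lambda>(x, y). f x * g y) (x, y))) UNIV)) summable_on UNIV"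
      using summable_on_cmult_left[OF f] by simp
  qed
  then show "(\<lambda>(x, y). norm (f x * g y)) summable_on UNIV \<times> UNIV"
    by (simp add: case_prod_unfold)
  have "(\<lambda>(x, y). f x * g y) summable_on UNIV \<times> UNIV"
    using abs_summable_summable[OF abs] by simp
  then have "infsum (\<lambda>(x, y). f x * g y) (UNIV \<times> UNIV) = infsum (\<lambda>x. infsum (\<lambda>y. f x * g y) UNIV) UNIV"
    using infsum_Sigma'_banach[of "\<lambda>x y. f x * g y" UNIV "\<lambda>_. UNIV"] by simp
  also have "\<dots> = infsum f UNIV * infsum g UNIV"
    by (simp add: infsum_cmult_right' infsum_cmult_left')
  finally show "infsum (\<lambda>(x, y). f x * g y) (UNIV \<times> UNIV) = infsum f UNIV * infsum g UNIV" .
qed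

definition lower_indices :: "('n::finite \<Rightarrow> nat) \<Rightarrow> ('n \<Rightarrow> nat) set" where
  "lower_indices \<gamma> = {\<alpha>. \<forall>i. \<alpha> i \<le> \<gamma> i}"

lemma finite_lower_indices [simp]: "finite (lower_indices \<gamma>)"
proof -
  have "lower_indices \<gamma> \<subseteq> PiE UNIV (\<lambda>i. {..\<gamma> i})"
    by (auto simp: lower_indices_def PiE_def Pi_def)
  then show ?thesis by (rule finite_subset) (auto intro: finite_PiE)
qed

lemma monom_lower_index:
  assumes "\<alpha> \<in> lower_indices \<gamma>"
  shows "monom \<alpha> z * monom (\<lambda>i. \<gamma> i - \<alpha> i) z = monom \<gamma> z"
proof -
  have "(\<lambda>i. \<alpha> i + (\<gamma> i - \<alpha> i)) = \<gamma>" using assms by (auto simp: lower_indices_def fun_eq_iff)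
  then show ?thesis using monom_add[of \<alpha> "\<lambda>i. \<gamma> i - \<alpha> i" z] by simp
qed

lemma infsum_antidiagonals:
  fixes F :: "('n::finite \<Rightarrow> nat) \<times> ('n \<Rightarrow> nat) \<Rightarrow> 'b::banach"
  assumes F: "F summable_on UNIV \<times> UNIV"
  shows "(\<lambda>\<gamma>. \<Sum>\<alpha>\<in>lower_indices \<gamma>. F (\<alpha>, \<lambda>i. \<gamma> i - \<alpha> i)) summable_on UNIV"
    and "infsum (\<lambda>\<gamma>. \<Sum>\<alpha>\<in>lower_indices \<gamma>. F (\<alpha>, \<lambda>i. \<gamma> i - \<alpha> i)) UNIV = infsum F (UNIV \<times> UNIV)"
proof -
  let ?j = "\<lambda>(\<alpha>::'n\<Rightarrow>nat, \<beta>::'n\<Rightarrow>nat). ((\<lambda>i. \<alpha> i + \<beta> i), \<alpha>)"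
  let ?i = "\<lambda>(\<gamma>::'n\<Rightarrow>nat, \<alpha>::'n\<Rightarrow>nat). (\<alpha>, \<lambda>i. \<gamma> i - \<alpha> i)"
  let ?h = "\<lambda>(\<gamma>, \<alpha>). F (\<alpha>, \<lambda>i. \<gamma> i - \<alpha> i)"
  have bij: "\<And>a. ?i (?j a) = a" "\<And>a. ?j a \<in> Sigma UNIV lower_indices"
    "\<And>b. b \<in> Sigma UNIV lower_indices \<Longrightarrow> ?j (?i b) = b" "\<And>b. ?i b \<in> UNIV \<times> UNIV"
    "\<And>a. ?h (?j a) = F a"
    by (auto simp: lower_indices_def fun_eq_iff)
  have S: "(\<lambda>(\<gamma>, \<alpha>). (\<lambda>\<gamma> \<alpha>. F (\<alpha>, \<lambda>i. \<gamma> i - \<alpha> i)) \<gamma> \<alpha>) summable_on Sigma UNIV lower_indices"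
    using summable_on_reindex_bij_witness[of "UNIV \<times> UNIV" ?i ?j "Sigma UNIV lower_indices" ?h F] bij F
    by simp
  have E: "infsum F (UNIV \<times> UNIV) = infsum ?h (Sigma UNIV lower_indices)"
    by (rule infsum_reindex_bij_witness[of "UNIV \<times> UNIV" ?i ?j]) (use bij in auto)
  show "(\<lambda>\<gamma>. \<Sum>\<alpha>\<in>lower_indices \<gamma>. F (\<alpha>, \<lambda>i. \<gamma> i - \<alpha> i)) summable_on UNIV"
    using summable_on_Sigma_banach[OF S] by simp
  show "infsum (\<lambda>\<gamma>. \<Sum>\<alpha>\<in>lower_indices \<gamma>. F (\<alpha>, \<lambda>i. \<gamma> i - \<alpha> i)) UNIV = infsum F (UNIV \<times> UNIV)"
    using infsum_Sigma'_banach[OF S] E by simp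
qed

definition cauchy_product ::
    "(('n::finite \<Rightarrow> nat) \<Rightarrow> 'a::semiring_0) \<Rightarrow> (('n \<Rightarrow> nat) \<Rightarrow> 'a) \<Rightarrow> ('n \<Rightarrow> nat) \<Rightarrow> 'a" where
  "cauchy_product c d \<gamma> = (\<Sum>\<alpha>\<in>lower_indices \<gamma>. c \<alpha> * d (\<lambda>i. \<gamma> i - \<alpha> i))"

lemma
  fixes c d :: "('n::finite \<Rightarrow> nat) \<Rightarrow> 'a::{real_normed_div_algebra,banach}"
  assumes c: "abs_summable c" and d: "abs_summable d"
  shows summable_cauchy_product: "cauchy_product c d summable_on UNIV"
    and infsum_cauchy_product: "infsum (cauchy_product c d) UNIV = infsum c UNIV * infsum d UNIV"
proof -
  have "(\<lambda>(x, y). c x * d y) summable_on UNIV \<times> UNIV"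
    using abs_summable_summable[of "\<lambda>(x, y). c x * d y"] abs_summable_mult_pair[OF c d]
    by (simp add: case_prod_unfold)
  from infsum_antidiagonals[OF this] infsum_mult_pair[OF c d]
  show "cauchy_product c d summable_on UNIV" "infsum (cauchy_product c d) UNIV = infsum c UNIV * infsum d UNIV"
    by (simp_all add: cauchy_product_def[abs_def])
qed

lemma norm_cauchy_product_le:
  fixes c d :: "('n::finite \<Rightarrow> nat) \<Rightarrow> 'a::real_normed_div_algebra"
  shows "norm (cauchy_product c d \<gamma>) \<le> cauchy_product (\<lambda>\<alpha>. norm (c \<alpha>)) (\<lambda>\<alpha>. norm (d \<alpha>)) \<gamma>"
  unfolding cauchy_product_def by (rule order_trans[OF norm_sum]) (simp add: norm_mult)

lemma
  fixes c d :: "('n::finite \<Rightarrow> nat) \<Rightarrow> 'a::{real_normed_div_algebra,banach}"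
  assumes c: "abs_summable c" and d: "abs_summable d"
  shows summable_cauchy_product_norm:
      "cauchy_product (\<lambda>\<alpha>. norm (c \<alpha>)) (\<lambda>\<alpha>. norm (d \<alpha>)) summable_on UNIV"
    and infsum_cauchy_product_norm: "infsum (cauchy_product (\<lambda>\<alpha>. norm (c \<alpha>)) (\<lambda>\<alpha>. norm (d \<alpha>))) UNIV
      = infsum (\<lambda>\<alpha>. norm (c \<alpha>)) UNIV * infsum (\<lambda>\<alpha>. norm (d \<alpha>)) UNIV"
    and abs_summable_cauchy_product: "abs_summable (cauchy_product c d)"
proof -
  have "abs_summable (\<lambda>\<alpha>. norm (c \<alpha>))" "abs_summable (\<lambda>\<alpha>. norm (d \<alpha>))"
    using c d by simp_all
  note norms = this
  show "cauchy_product (\<lambda>\<alpha>. norm (c \<alpha>)) (\<lambda>\<alpha>. norm (d \<alpha>)) summable_on UNIV"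
    by (rule summable_cauchy_product[OF norms])
  then show "abs_summable (cauchy_product c d)"
    by (rule Infinite_Sum.abs_summable_on_comparison_test') (rule norm_cauchy_product_le)
  show "infsum (cauchy_product (\<lambda>\<alpha>. norm (c \<alpha>)) (\<lambda>\<alpha>. norm (d \<alpha>))) UNIV
      = infsum (\<lambda>\<alpha>. norm (c \<alpha>)) UNIV * infsum (\<lambda>\<alpha>. norm (d \<alpha>)) UNIV"
    by (rule infsum_cauchy_product[OF norms])
qed

lemma cauchy_product_mult_monom:
  "cauchy_product (\<lambda>\<alpha>. c \<alpha> * monom \<alpha> z) (\<lambda>\<alpha>. d \<alpha> * monom \<alpha> z) \<gamma> = cauchy_product c d \<gamma> * monom \<gamma> z"
  unfolding cauchy_product_def sum_distrib_right
  by (rule sum.cong[OF refl]) (simp flip: monom_lower_index add: ac_simps)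

lemma series_eval_cauchy_product:
  assumes c: "abs_summable c" and d: "abs_summable d" and z: "z \<in> closed_polydisc"
  shows "series_eval (cauchy_product c d) z = series_eval c z * series_eval d z"
  using infsum_cauchy_product[OF abs_summable_monom_terms[OF c z] abs_summable_monom_terms[OF d z]]
  unfolding series_eval_def cauchy_product_mult_monom[symmetric] .

lemma Aplus_rep_mult:
  assumes "Aplus_rep f c" "Aplus_rep g d"
  shows "Aplus_rep (\<lambda>z. f z * g z) (cauchy_product c d)"
proof -
  have c: "abs_summable c" and d: "abs_summable d" using assms by (auto simp: Aplus_rep_def)
  show ?thesis
    using assms abs_summable_cauchy_product[OF c d]
      series_eval_cauchy_product[OF c d polydisc_imp_closed_polydisc]
    by (simp add: Aplus_rep_def)
qed

lemma cauchy_product_scale: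
  "cauchy_product (\<lambda>\<alpha>. a * c \<alpha>) (\<lambda>\<beta>. b * d \<beta>) \<gamma> = (a * b :: 'a::comm_semiring_0) * cauchy_product c d \<gamma>"
  unfolding cauchy_product_def by (simp add: sum_distrib_left ac_simps)

lemma cauchy_product_nonneg:
  "(\<And>\<alpha>. 0 \<le> c \<alpha>) \<Longrightarrow> (\<And>\<alpha>. 0 \<le> d \<alpha>) \<Longrightarrow> 0 \<le> (cauchy_product c d \<gamma> :: 'a::ordered_semiring_0)"
  unfolding cauchy_product_def by (intro sum_nonneg mult_nonneg_nonneg)

text \<open>If the \<open>\<ell>\<^sup>1\<close> norm is multiplicative on \<open>c\<close>, \<open>d\<close>, no cancellation occurs in their Cauchy
  product, so the support of the product contains the sumset of the supports.\<close>

lemma cauchy_product_neq_0_if_norm_mult: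
  fixes c d :: "('n::finite \<Rightarrow> nat) \<Rightarrow> complex"
  assumes c: "abs_summable c" and d: "abs_summable d"
    and eq: "infsum (\<lambda>\<gamma>. norm (cauchy_product c d \<gamma>)) UNIV
      = infsum (\<lambda>\<alpha>. norm (c \<alpha>)) UNIV * infsum (\<lambda>\<alpha>. norm (d \<alpha>)) UNIV"
    and "c \<alpha> \<noteq> 0" "d \<beta> \<noteq> 0"
  shows "cauchy_product c d (\<lambda>i. \<alpha> i + \<beta> i) \<noteq> 0"
proof -
  let ?\<gamma> = "\<lambda>i. \<alpha> i + \<beta> i"
  have no_cancellation: "norm (cauchy_product c d \<gamma>)
      = cauchy_product (\<lambda>\<alpha>. norm (c \<alpha>)) (\<lambda>\<alpha>. norm (d \<alpha>)) \<gamma>" for \<gamma>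
    by (rule sym, rule eq_if_le_and_infsum_eq[OF summable_cauchy_product_norm[OF c d]
          abs_summable_cauchy_product[OF c d]])
       (simp_all add: infsum_cauchy_product_norm[OF c d] eq norm_cauchy_product_le)
  have "\<alpha> \<in> lower_indices ?\<gamma>" by (simp add: lower_indices_def)
  then have "norm (c \<alpha> * d (\<lambda>i. ?\<gamma> i - \<alpha> i)) \<le> cauchy_product (\<lambda>\<alpha>. norm (c \<alpha>)) (\<lambda>\<alpha>. norm (d \<alpha>)) ?\<gamma>"
    unfolding cauchy_product_def norm_mult by (rule member_le_sum) auto
  moreover have "norm (c \<alpha> * d (\<lambda>i. ?\<gamma> i - \<alpha> i)) > 0"
    using assms(4,5) by simp
  ultimately show ?thesis using no_cancellation[of ?\<gamma>] by auto
qed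

section \<open>Two combinatorial facts about multi-indices\<close>

lemma multi_index_induct [case_names zero add_unit]:
  fixes P :: "('n::finite \<Rightarrow> nat) \<Rightarrow> bool"
  assumes zero: "P (\<lambda>_. 0)" and add_unit: "\<And>\<alpha> i. P \<alpha> \<Longrightarrow> P (\<lambda>k. \<alpha> k + unit_index i k)"
  shows "P \<alpha>"
proof (induction \<alpha> rule: measure_induct_rule[where f="\<lambda>\<alpha>. sum \<alpha> UNIV"])
  case (less \<alpha>)
  show ?case
  proof (cases "\<alpha> = (\<lambda>_. 0)")
    case True
    with zero show ?thesis by simp
  next
    case False
    then obtain i where i: "\<alpha> i > 0" by (auto simp: fun_eq_iff)
    define \<alpha>' where "\<alpha>' = \<alpha>(i := \<alpha> i - 1)"
    have \<alpha>: "\<alpha> = (\<lambda>k. \<alpha>' k + unit_index i k)"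
      using i by (auto simp: \<alpha>'_def unit_index_def fun_eq_iff)
    have "sum \<alpha> UNIV = sum \<alpha>' UNIV + 1"
      by (subst \<alpha>) (simp add: sum.distrib unit_index_def)
    then have "P \<alpha>'" by (intro less) simp
    then show ?thesis by (subst \<alpha>) (rule add_unit)
  qed
qed

lemma interpolation_eq_imp_eq:
  fixes x x' a b s c :: nat
  assumes "x \<le> a" "x' \<le> a" "b \<noteq> s" "x * b + (a - x) * s + c = x' * b + (a - x') * s + c"
  shows "x = x'"
proof -
  have "int x * int b + (int a - int x) * int s = int x' * int b + (int a - int x') * int s"
    using assms(1,2,4) arg_cong[OF assms(4), of int] by (simp add: of_nat_diff)
  then have "(int x - int x') * (int b - int s) = 0" by (simp add: algebra_simps)
  then show ?thesis using assms(3) by simp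
qed

lemma box_too_small:
  fixes C k :: nat
  defines "N \<equiv> (2 * C + 1) ^ k"
  shows "(C * (2 * N) + 1) ^ k < (N + 1) ^ Suc k"
proof -
  have "(C * (2 * N) + 1) ^ k \<le> ((2 * C + 1) * (N + 1)) ^ k"
    by (rule power_mono) (auto simp: algebra_simps)
  also have "\<dots> = N * (N + 1) ^ k"
    unfolding N_def by (rule power_mult_distrib)
  also have "\<dots> < (N + 1) ^ Suc k"
    by simp
  finally show ?thesis .
qed

text \<open>Take the multi-indices \<open>\<alpha>\<close> with \<open>N \<le> \<alpha> r \<le> 2N\<close> and all other entries at most \<open>N\<close>:
  they contribute \<open>(N + 1)\<^sup>k\<close> disjoint sets of \<open>N + 1\<close> points each, all inside the
  cube \<open>[0, 2CN]\<^sup>k\<close>, which has fewer points once \<open>N = (2C + 1)\<^sup>k\<close>.\<close>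

lemma no_linearly_bounded_disjoint_injections:
  fixes P :: "('n::finite \<Rightarrow> nat) \<Rightarrow> nat \<Rightarrow> ('n \<Rightarrow> nat)" and r :: 'n and C :: nat
  assumes disj: "\<And>\<alpha> \<alpha>' x x'. \<alpha> \<noteq> \<alpha>' \<Longrightarrow> x \<le> \<alpha> r \<Longrightarrow> x' \<le> \<alpha>' r \<Longrightarrow> P \<alpha> x \<noteq> P \<alpha>' x'"
    and inj: "\<And>\<alpha> x x'. x \<le> \<alpha> r \<Longrightarrow> x' \<le> \<alpha> r \<Longrightarrow> P \<alpha> x = P \<alpha> x' \<Longrightarrow> x = x'"
    and bound: "\<And>\<alpha> x j M. (\<forall>k. \<alpha> k \<le> M) \<Longrightarrow> x \<le> \<alpha> r \<Longrightarrow> P \<alpha> x j \<le> C * M"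
  shows False
proof -
  define k where "k = CARD('n)"
  define N where "N = (2 * C + 1) ^ k"
  define A where "A = PiE UNIV (\<lambda>j. if j = r then {N..2 * N} else {..N})"
  define T where "T = PiE UNIV (\<lambda>_::'n. {..C * (2 * N)})"
  define Q where "Q \<alpha> = P \<alpha> ` {..N}" for \<alpha>
  have memA: "\<alpha> \<in> A \<longleftrightarrow> N \<le> \<alpha> r \<and> \<alpha> r \<le> 2 * N \<and> (\<forall>j. j \<noteq> r \<longrightarrow> \<alpha> j \<le> N)" for \<alpha>
    by (auto simp: A_def PiE_UNIV_domain Pi_def)
  have finA: "finite A" unfolding A_def by (rule finite_PiE) auto
  have "card A = (\<Prod>j\<in>(UNIV::'n set). N + 1)"
    unfolding A_def card_PiE[OF finite] by (rule prod.cong) auto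
  then have cardA: "card A = (N + 1) ^ k" by (simp add: k_def)
  have cardQ: "card (Q \<alpha>) = N + 1" if "\<alpha> \<in> A" for \<alpha>
  proof -
    have "inj_on (P \<alpha>) {..N}"
      using inj memA that by (intro inj_onI) (meson atMost_iff le_trans)
    then show ?thesis by (simp add: Q_def card_image)
  qed
  have QT: "Q \<alpha> \<subseteq> T" if "\<alpha> \<in> A" for \<alpha>
  proof
    fix y assume "y \<in> Q \<alpha>"
    then obtain x where x: "x \<le> N" "y = P \<alpha> x" by (auto simp: Q_def)
    have "\<forall>j. \<alpha> j \<le> 2 * N" using memA that by (metis le_trans mult_le_mono1 nat_mult_1 one_le_numeral)
    moreover have "x \<le> \<alpha> r" using x memA that by auto
    ultimately show "y \<in> T" using bound x by (auto simp: T_def PiE_UNIV_domain)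
  qed
  have "disjoint_family_on Q A"
    using disj memA unfolding disjoint_family_on_def Q_def by (auto intro: order_trans)
  have "(N + 1) ^ Suc k = (\<Sum>\<alpha>\<in>A. card (Q \<alpha>))" using cardQ cardA by simp
  also have "\<dots> = card (\<Union>\<alpha>\<in>A. Q \<alpha>)"
    using finA \<open>disjoint_family_on Q A\<close>
    by (intro card_UN_disjoint[symmetric]) (auto simp: Q_def disjoint_family_on_def)
  also have "\<dots> \<le> card T"
    using QT by (intro card_mono) (auto simp: T_def intro: finite_PiE)
  also have "\<dots> = (C * (2 * N) + 1) ^ k" by (simp add: T_def card_PiE k_def)
  finally show False using box_too_small[of C k] by (simp add: N_def)
qed

locale Aplus_composition =
  fixes \<phi> :: "'n::finite \<Rightarrow> ('n \<Rightarrow> complex) \<Rightarrow> complex"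
  assumes bounded_op: "\<And>f. in_Aplus f \<Longrightarrow> in_Aplus (comp_op \<phi> f)"
begin

definition phi_pow :: "('n \<Rightarrow> nat) \<Rightarrow> ('n \<Rightarrow> complex) \<Rightarrow> complex" where
  "phi_pow \<alpha> = (\<lambda>z. monom \<alpha> (\<lambda>i. \<phi> i z))"

definition pow_coeff :: "('n \<Rightarrow> nat) \<Rightarrow> ('n \<Rightarrow> nat) \<Rightarrow> complex" where
  "pow_coeff \<alpha> = Aplus_coeff (phi_pow \<alpha>)"

lemma comp_op_monom: "comp_op \<phi> (monom \<alpha>) = phi_pow \<alpha>"
  by (simp add: comp_op_def Aplus_ext_monom phi_pow_def)

lemma Aplus_rep_phi_pow: "Aplus_rep (phi_pow \<alpha>) (pow_coeff \<alpha>)"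
  unfolding pow_coeff_def
  by (metis Aplus_rep_Aplus_coeff bounded_op comp_op_monom in_Aplus_monom)

lemma abs_summable_pow_coeff: "abs_summable (pow_coeff \<alpha>)"
  using Aplus_rep_phi_pow by (rule Aplus_rep_abs_summable)

lemma series_eval_pow_coeff: "z \<in> polydisc \<Longrightarrow> series_eval (pow_coeff \<alpha>) z = monom \<alpha> (\<lambda>i. \<phi> i z)"
  using Aplus_rep_phi_pow by (simp add: Aplus_rep_def phi_pow_def)

lemma pow_coeff_add: "pow_coeff (\<lambda>k. \<alpha> k + \<beta> k) = cauchy_product (pow_coeff \<alpha>) (pow_coeff \<beta>)"
proof -
  have "Aplus_rep (\<lambda>z. phi_pow \<alpha> z * phi_pow \<beta> z) (cauchy_product (pow_coeff \<alpha>) (pow_coeff \<beta>))"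
    by (rule Aplus_rep_mult[OF Aplus_rep_phi_pow Aplus_rep_phi_pow])
  then have "Aplus_rep (phi_pow (\<lambda>k. \<alpha> k + \<beta> k)) (cauchy_product (pow_coeff \<alpha>) (pow_coeff \<beta>))"
    by (rule Aplus_rep_cong) (simp add: phi_pow_def monom_add)
  then show ?thesis unfolding pow_coeff_def by (rule Aplus_coeff_eq)
qed

lemma pow_coeff_zero: "pow_coeff (\<lambda>_. 0) = monom_coeffs (\<lambda>_. 0)"
proof -
  have "phi_pow (\<lambda>_. 0) = monom (\<lambda>_. 0)" by (simp add: phi_pow_def fun_eq_iff)
  then show ?thesis by (simp add: pow_coeff_def Aplus_coeff_monom)
qed

lemma phi_pow_unit_index: "phi_pow (unit_index i) = \<phi> i"
  by (simp add: phi_pow_def monom_unit_index fun_eq_iff)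

lemma spectra_disjoint_iff:
  "spectrum_Aplus (\<lambda>z. monom \<alpha> (\<lambda>i. \<phi> i z)) \<inter> spectrum_Aplus (\<lambda>z. monom \<alpha>' (\<lambda>i. \<phi> i z)) = {}
    \<longleftrightarrow> (\<forall>\<gamma>. pow_coeff \<alpha> \<gamma> = 0 \<or> pow_coeff \<alpha>' \<gamma> = 0)"
  by (auto simp: spectrum_Aplus_def pow_coeff_def phi_pow_def)

end

section \<open>Isometric composition operators\<close>

lemma norm_add_diff_eq_imp_eq_0:
  fixes a b :: complex
  assumes "norm (a + b) = norm a + norm b" "norm (a - b) = norm a + norm b"
  shows "a = 0 \<or> b = 0"
proof -
  have "norm (a + b)^2 + norm (a - b)^2 = 2 * norm a ^ 2 + 2 * norm b ^ 2"
    unfolding cmod_power2 by (simp add: algebra_simps power2_eq_square)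
  then have "norm a * norm b = 0"
    using assms by (simp add: power2_eq_square algebra_simps)
  then show ?thesis by simp
qed

locale Aplus_isometric_composition = Aplus_composition +
  assumes isometric: "\<And>f. in_Aplus f \<Longrightarrow> Aplus_norm (comp_op \<phi> f) = Aplus_norm f"
begin

lemma norm_pow_coeff: "infsum (\<lambda>\<gamma>. norm (pow_coeff \<alpha> \<gamma>)) UNIV = 1"
  using isometric[OF in_Aplus_monom, of \<alpha>]
  by (simp add: comp_op_monom Aplus_norm_monom Aplus_norm_eq[OF Aplus_rep_phi_pow])

text \<open>The test function \<open>z\<^sup>\<alpha> + s z\<^sup>\<alpha>'\<close> has norm 2, hence so has its image
  \<open>\<phi>\<^sup>\<alpha> + s \<phi>\<^sup>\<alpha>'\<close>.\<close>

lemma norm_pow_coeff_add_unimodular: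
  assumes ne: "\<alpha> \<noteq> \<alpha>'" and s: "norm s = 1"
  shows "norm (pow_coeff \<alpha> \<gamma> + s * pow_coeff \<alpha>' \<gamma>) = norm (pow_coeff \<alpha> \<gamma>) + norm (pow_coeff \<alpha>' \<gamma>)"
proof -
  define c where "c = (\<lambda>\<beta>. monom_coeffs \<alpha> \<beta> + s * monom_coeffs \<alpha>' \<beta>)"
  have rep: "Aplus_rep (\<lambda>w. monom \<alpha> w + s * monom \<alpha>' w) c"
    unfolding c_def by (rule Aplus_rep_add[OF Aplus_rep_monom Aplus_rep_scale[OF Aplus_rep_monom]])
  have test_norm: "Aplus_norm (\<lambda>w. monom \<alpha> w + s * monom \<alpha>' w) = 2"
    unfolding Aplus_norm_eq[OF rep] using ne s
    by (subst infsum_eq_two[OF ne]) (auto simp: c_def monom_coeffs_def)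
  have "series_eval c w = monom \<alpha> w + s * monom \<alpha>' w" for w
    unfolding series_eval_def using ne
    by (subst infsum_eq_two[OF ne]) (auto simp: c_def monom_coeffs_def)
  then have image: "comp_op \<phi> (\<lambda>w. monom \<alpha> w + s * monom \<alpha>' w) = (\<lambda>z. phi_pow \<alpha> z + s * phi_pow \<alpha>' z)"
    by (simp add: comp_op_def Aplus_ext_def Aplus_coeff_eq[OF rep] phi_pow_def)
  have rep': "Aplus_rep (\<lambda>z. phi_pow \<alpha> z + s * phi_pow \<alpha>' z) (\<lambda>\<gamma>. pow_coeff \<alpha> \<gamma> + s * pow_coeff \<alpha>' \<gamma>)"
    by (rule Aplus_rep_add[OF Aplus_rep_phi_pow Aplus_rep_scale[OF Aplus_rep_phi_pow]])
  have "infsum (\<lambda>\<gamma>. norm (pow_coeff \<alpha> \<gamma> + s * pow_coeff \<alpha>' \<gamma>)) UNIV = 2"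
    using isometric[of "\<lambda>w. monom \<alpha> w + s * monom \<alpha>' w"] rep test_norm image
    by (auto simp: in_Aplus_def Aplus_norm_eq[OF rep'])
  moreover have "infsum (\<lambda>\<gamma>. norm (pow_coeff \<alpha> \<gamma>) + norm (pow_coeff \<alpha>' \<gamma>)) UNIV = 2"
    using infsum_add[OF abs_summable_pow_coeff abs_summable_pow_coeff] norm_pow_coeff by simp
  ultimately have "norm (pow_coeff \<alpha> \<gamma>) + norm (pow_coeff \<alpha>' \<gamma>)
      = norm (pow_coeff \<alpha> \<gamma> + s * pow_coeff \<alpha>' \<gamma>)"
  proof (intro eq_if_le_and_infsum_eq[OF summable_on_add[OF abs_summable_pow_coeff abs_summable_pow_coeff]
        Aplus_rep_abs_summable[OF rep']])
    show "norm (pow_coeff \<alpha> x + s * pow_coeff \<alpha>' x) \<le> norm (pow_coeff \<alpha> x) + norm (pow_coeff \<alpha>' x)"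
      for x using norm_triangle_ineq[of "pow_coeff \<alpha> x" "s * pow_coeff \<alpha>' x"] s
      by (simp add: norm_mult)
  qed simp
  then show ?thesis by simp
qed

lemma pow_coeff_disjoint:
  assumes "\<alpha> \<noteq> \<alpha>'"
  shows "pow_coeff \<alpha> \<gamma> = 0 \<or> pow_coeff \<alpha>' \<gamma> = 0"
  using norm_pow_coeff_add_unimodular[OF assms, of 1 \<gamma>] norm_pow_coeff_add_unimodular[OF assms, of "-1" \<gamma>]
  by (intro norm_add_diff_eq_imp_eq_0) simp_all

lemma pow_coeff_add_neq_0:
  assumes "pow_coeff \<alpha> \<gamma> \<noteq> 0" "pow_coeff \<beta> \<delta> \<noteq> 0"
  shows "pow_coeff (\<lambda>k. \<alpha> k + \<beta> k) (\<lambda>j. \<gamma> j + \<delta> j) \<noteq> 0"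
  unfolding pow_coeff_add
  by (rule cauchy_product_neq_0_if_norm_mult[OF abs_summable_pow_coeff abs_summable_pow_coeff _ assms])
     (simp flip: pow_coeff_add add: norm_pow_coeff)

lemma ex_pow_coeff_neq_0: "\<exists>\<gamma>. pow_coeff \<alpha> \<gamma> \<noteq> 0"
proof (rule ccontr)
  assume "\<nexists>\<gamma>. pow_coeff \<alpha> \<gamma> \<noteq> 0"
  then show False using norm_pow_coeff[of \<alpha>] by simp
qed

lemma pow_coeff_zero_zero: "pow_coeff (\<lambda>_. 0) (\<lambda>_. 0) = 1"
  by (simp add: pow_coeff_zero monom_coeffs_def)

lemma pow_coeff_multiple_unit_neq_0:
  assumes \<beta>: "pow_coeff (unit_index i) \<beta> \<noteq> 0" and s: "pow_coeff (unit_index i) s \<noteq> 0"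
  shows "x \<le> n \<Longrightarrow> pow_coeff (\<lambda>k. n * unit_index i k) (\<lambda>j. x * \<beta> j + (n - x) * s j) \<noteq> 0"
proof (induction n arbitrary: x)
  case 0
  then show ?case using pow_coeff_zero_zero by simp
next
  case (Suc n)
  have n: "(\<lambda>k. n * unit_index i k + unit_index i k) = (\<lambda>k. Suc n * unit_index i k)" by auto
  show ?case
  proof (cases "x \<le> n")
    case True
    have "(\<lambda>j. (x * \<beta> j + (n - x) * s j) + s j) = (\<lambda>j. x * \<beta> j + (Suc n - x) * s j)"
      using True by (auto simp: fun_eq_iff Suc_diff_le)
    then show ?thesis using pow_coeff_add_neq_0[OF Suc.IH[OF True] s] n by simp
  next
    case False
    then have x: "x = Suc n" using Suc.prems by simp
    have "(\<lambda>j. (n * \<beta> j + (n - n) * s j) + \<beta> j) = (\<lambda>j. x * \<beta> j + (Suc n - x) * s j)"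
      using x by (auto simp: fun_eq_iff)
    then show ?thesis using pow_coeff_add_neq_0[OF Suc.IH[of n] \<beta>] n by simp
  qed
qed

lemma pow_coeff_restrict_neq_0:
  assumes "finite I" and \<sigma>: "\<And>i. pow_coeff (unit_index i) (\<sigma> i) \<noteq> 0"
  shows "pow_coeff (\<lambda>k. if k \<in> I then \<alpha> k else 0) (\<lambda>j. \<Sum>i\<in>I. \<alpha> i * \<sigma> i j) \<noteq> 0"
  using assms(1)
proof (induction I rule: finite_induct)
  case empty
  then show ?case using pow_coeff_zero_zero by simp
next
  case (insert i I)
  have "pow_coeff (\<lambda>k. \<alpha> i * unit_index i k) (\<lambda>j. 0 * \<sigma> i j + (\<alpha> i - 0) * \<sigma> i j) \<noteq> 0"
    by (rule pow_coeff_multiple_unit_neq_0[OF \<sigma> \<sigma>]) simp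
  from pow_coeff_add_neq_0[OF insert.IH this]
  moreover have "(\<lambda>k. (if k \<in> I then \<alpha> k else 0) + \<alpha> i * unit_index i k)
      = (\<lambda>k. if k \<in> insert i I then \<alpha> k else 0)"
    using insert.hyps by (auto simp: fun_eq_iff unit_index_def)
  moreover have "(\<lambda>j. (\<Sum>i\<in>I. \<alpha> i * \<sigma> i j) + (0 * \<sigma> i j + (\<alpha> i - 0) * \<sigma> i j))
      = (\<lambda>j. \<Sum>i\<in>insert i I. \<alpha> i * \<sigma> i j)"
    using insert.hyps by (auto simp: fun_eq_iff)
  ultimately show ?case by simp
qed

lemma pow_coeff_neq_0_at:
  assumes \<beta>: "pow_coeff (unit_index r) \<beta> \<noteq> 0" and \<sigma>: "\<And>i. pow_coeff (unit_index i) (\<sigma> i) \<noteq> 0"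
    and x: "x \<le> \<alpha> r"
  shows "pow_coeff \<alpha> (\<lambda>j. x * \<beta> j + (\<alpha> r - x) * \<sigma> r j + (\<Sum>i\<in>UNIV-{r}. \<alpha> i * \<sigma> i j)) \<noteq> 0"
proof -
  have "pow_coeff (\<lambda>k. \<alpha> r * unit_index r k + (if k \<in> UNIV-{r} then \<alpha> k else 0))
      (\<lambda>j. (x * \<beta> j + (\<alpha> r - x) * \<sigma> r j) + (\<Sum>i\<in>UNIV-{r}. \<alpha> i * \<sigma> i j)) \<noteq> 0"
    by (rule pow_coeff_add_neq_0[OF pow_coeff_multiple_unit_neq_0[OF \<beta> \<sigma> x]
          pow_coeff_restrict_neq_0[OF _ \<sigma>]]) simp
  moreover have "(\<lambda>k. \<alpha> r * unit_index r k + (if k \<in> UNIV-{r} then \<alpha> k else 0)) = \<alpha>"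
    by (auto simp: fun_eq_iff unit_index_def)
  ultimately show ?thesis by simp
qed

text \<open>If \<open>\<phi>\<^sub>r\<close> had two exponents \<open>\<beta> \<noteq> s\<close> in its spectrum, the spectrum of every \<open>\<phi>\<^sup>\<alpha>\<close> would
  contain \<open>\<alpha> r + 1\<close> distinct points; these spectra are pairwise disjoint and grow only linearly
  in \<open>\<alpha>\<close>, which is impossible.\<close>

lemma pow_coeff_unit_index_unique:
  assumes \<beta>: "pow_coeff (unit_index r) \<beta> \<noteq> 0" and s: "pow_coeff (unit_index r) s \<noteq> 0"
  shows "\<beta> = s"
proof (rule ccontr)
  assume "\<beta> \<noteq> s"
  then obtain j0 where j0: "\<beta> j0 \<noteq> s j0" by auto
  have "\<forall>i. \<exists>\<gamma>. pow_coeff (unit_index i) \<gamma> \<noteq> 0" using ex_pow_coeff_neq_0 by blast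
  then obtain \<sigma>0 where "\<And>i. pow_coeff (unit_index i) (\<sigma>0 i) \<noteq> 0" by metis
  define \<sigma> where "\<sigma> = \<sigma>0(r := s)"
  have \<sigma>: "pow_coeff (unit_index i) (\<sigma> i) \<noteq> 0" for i
    using \<open>\<And>i. pow_coeff (unit_index i) (\<sigma>0 i) \<noteq> 0\<close> s by (simp add: \<sigma>_def)
  have \<sigma>r: "\<sigma> r = s" by (simp add: \<sigma>_def)
  define P where "P \<alpha> x = (\<lambda>j. x * \<beta> j + (\<alpha> r - x) * s j + (\<Sum>i\<in>UNIV-{r}. \<alpha> i * \<sigma> i j))" for \<alpha> x
  define C where "C = (\<Sum>j\<in>UNIV. \<beta> j + s j + (\<Sum>i\<in>UNIV. \<sigma> i j))"
  show False
  proof (rule no_linearly_bounded_disjoint_injections[where P=P and r=r and C=C])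
    fix \<alpha> \<alpha>' :: "'a \<Rightarrow> nat" and x x' :: nat assume "\<alpha> \<noteq> \<alpha>'" "x \<le> \<alpha> r" "x' \<le> \<alpha>' r"
    then show "P \<alpha> x \<noteq> P \<alpha>' x'"
      using pow_coeff_disjoint[of \<alpha> \<alpha>' "P \<alpha> x"] pow_coeff_neq_0_at[OF \<beta> \<sigma>, of x \<alpha>]
        pow_coeff_neq_0_at[OF \<beta> \<sigma>, of x' \<alpha>'] \<sigma>r
      unfolding P_def by auto
  next
    fix \<alpha> :: "'a \<Rightarrow> nat" and x x' :: nat assume "x \<le> \<alpha> r" "x' \<le> \<alpha> r" "P \<alpha> x = P \<alpha> x'"
    then show "x = x'"
      using j0 by (intro interpolation_eq_imp_eq[of x "\<alpha> r" x' "\<beta> j0" "s j0"]) (auto simp: P_def dest: fun_cong)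
  next
    fix \<alpha> :: "'a \<Rightarrow> nat" and x M :: nat and j :: 'a assume M: "\<forall>k. \<alpha> k \<le> M" and x: "x \<le> \<alpha> r"
    have "x \<le> M" "\<alpha> r - x \<le> M" using M x le_trans diff_le_self by blast+
    moreover have "(\<Sum>i\<in>UNIV-{r}. \<alpha> i * \<sigma> i j) \<le> (\<Sum>i\<in>UNIV. M * \<sigma> i j)"
      using M by (intro order_trans[OF sum_mono2 sum_mono]) (auto intro: mult_le_mono1)
    ultimately have "P \<alpha> x j \<le> M * \<beta> j + M * s j + (\<Sum>i\<in>UNIV. M * \<sigma> i j)"
      unfolding P_def by (intro add_mono mult_le_mono1)
    also have "\<dots> \<le> M * C"
      unfolding C_def sum_distrib_left[symmetric] distrib_left[symmetric]
      by (intro mult_le_mono2 member_le_sum[where f="\<lambda>j. \<beta> j + s j + (\<Sum>i\<in>UNIV. \<sigma> i j)"]) auto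
    finally show "P \<alpha> x j \<le> C * M" by (simp add: mult.commute)
  qed
qed

lemma phi_eq_unimodular_monom:
  obtains \<epsilon> s where "norm \<epsilon> = 1" "\<And>z. z \<in> polydisc \<Longrightarrow> \<phi> i z = \<epsilon> * monom s z"
proof -
  obtain s where s: "pow_coeff (unit_index i) s \<noteq> 0" using ex_pow_coeff_neq_0 by blast
  have zero: "pow_coeff (unit_index i) \<gamma> = 0" if "\<gamma> \<noteq> s" for \<gamma>
    using pow_coeff_unit_index_unique[OF _ s] that by blast
  show thesis
  proof
    show "norm (pow_coeff (unit_index i) s) = 1"
      using norm_pow_coeff[of "unit_index i"] by (subst (asm) infsum_eq_single[where a=s]) (auto simp: zero)
    fix z :: "'a \<Rightarrow> complex" assume "z \<in> polydisc"
    then have "\<phi> i z = series_eval (pow_coeff (unit_index i)) z"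
      by (simp add: series_eval_pow_coeff monom_unit_index)
    also have "\<dots> = pow_coeff (unit_index i) s * monom s z"
      unfolding series_eval_def by (subst infsum_eq_single[where a=s]) (auto simp: zero)
    finally show "\<phi> i z = pow_coeff (unit_index i) s * monom s z" .
  qed
qed

lemma conditions_if_isometric:
  "(\<forall>i. \<exists>\<epsilon> F. norm \<epsilon> = 1 \<and> in_Aplus F
          \<and> (\<forall>\<beta>. Im (Aplus_coeff F \<beta>) = 0 \<and> Re (Aplus_coeff F \<beta>) \<ge> 0)
          \<and> (\<forall>z\<in>polydisc. \<phi> i z = \<epsilon> * F z)
          \<and> Aplus_ext F (\<lambda>_. 1) = 1
          \<and> (SUP z\<in>polydisc. norm (F z)) = 1)
     \<and> (\<forall>\<alpha> \<alpha>'. \<alpha> \<noteq> \<alpha>' \<longrightarrow>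
          spectrum_Aplus (\<lambda>z. monom \<alpha> (\<lambda>i. \<phi> i z)) \<inter>
          spectrum_Aplus (\<lambda>z. monom \<alpha>' (\<lambda>i. \<phi> i z)) = {})"
proof (intro conjI allI impI)
  fix i
  obtain \<epsilon> s where "norm \<epsilon> = 1" "\<And>z. z \<in> polydisc \<Longrightarrow> \<phi> i z = \<epsilon> * monom s z"
    using phi_eq_unimodular_monom by metis
  then show "\<exists>\<epsilon> F. norm \<epsilon> = 1 \<and> in_Aplus F
          \<and> (\<forall>\<beta>. Im (Aplus_coeff F \<beta>) = 0 \<and> Re (Aplus_coeff F \<beta>) \<ge> 0)
          \<and> (\<forall>z\<in>polydisc. \<phi> i z = \<epsilon> * F z)
          \<and> Aplus_ext F (\<lambda>_. 1) = 1
          \<and> (SUP z\<in>polydisc. norm (F z)) = 1"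
    using in_Aplus_monom Aplus_ext_monom sup_norm_monom
    by (intro exI[of _ \<epsilon>] exI[of _ "monom s"]) (auto simp: Aplus_coeff_monom monom_coeffs_def Aplus_ext_monom)
qed (use pow_coeff_disjoint spectra_disjoint_iff in blast)

end

section \<open>Sufficiency of the conditions\<close>

context Aplus_composition
begin

context
  fixes \<epsilon> :: "'n \<Rightarrow> complex" and F :: "'n \<Rightarrow> ('n \<Rightarrow> complex) \<Rightarrow> complex"
  assumes unimodular: "\<And>i. norm (\<epsilon> i) = 1" and in_Aplus_F: "\<And>i. in_Aplus (F i)"
    and nonneg: "\<And>i \<beta>. 0 \<le> Aplus_coeff (F i) \<beta>"
    and factor: "\<And>i z. z \<in> polydisc \<Longrightarrow> \<phi> i z = \<epsilon> i * F i z"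
    and normalised: "\<And>i. Aplus_ext (F i) (\<lambda>_. 1) = 1"
begin

lemma pow_coeff_eq_unimodular_times_nonneg:
  "\<exists>p. (\<forall>\<gamma>. 0 \<le> p \<gamma>) \<and> abs_summable p \<and> infsum p UNIV = 1 \<and> pow_coeff \<alpha> = (\<lambda>\<gamma>. monom \<alpha> \<epsilon> * p \<gamma>)"
proof (induction \<alpha> rule: multi_index_induct)
  case zero
  show ?case
    using abs_summable_monom_coeffs[of "\<lambda>_. 0"] infsum_norm_monom_coeffs[of "\<lambda>_. 0"]
    by (intro exI[of _ "monom_coeffs (\<lambda>_. 0)"])
       (auto simp: pow_coeff_zero monom_coeffs_def less_eq_complex_def infsum_eq_single[where a="\<lambda>_. 0"])
next
  case (add_unit \<alpha> i)
  then obtain p where p: "\<forall>\<gamma>. 0 \<le> p \<gamma>" "abs_summable p" "infsum p UNIV = 1"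
      "pow_coeff \<alpha> = (\<lambda>\<gamma>. monom \<alpha> \<epsilon> * p \<gamma>)"
    by blast
  define q where "q = Aplus_coeff (F i)"
  have rep: "Aplus_rep (F i) q" unfolding q_def by (rule Aplus_rep_Aplus_coeff[OF in_Aplus_F])
  have "Aplus_rep (\<phi> i) (\<lambda>\<gamma>. \<epsilon> i * q \<gamma>)"
    by (rule Aplus_rep_cong[OF Aplus_rep_scale[OF rep]]) (simp add: factor)
  then have unit: "pow_coeff (unit_index i) = (\<lambda>\<gamma>. \<epsilon> i * q \<gamma>)"
    unfolding pow_coeff_def phi_pow_unit_index by (rule Aplus_coeff_eq)
  have "monom (\<lambda>k. \<alpha> k + unit_index i k) \<epsilon> = monom \<alpha> \<epsilon> * \<epsilon> i"
    by (simp add: monom_add monom_unit_index)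
  then have "pow_coeff (\<lambda>k. \<alpha> k + unit_index i k)
      = (\<lambda>\<gamma>. monom (\<lambda>k. \<alpha> k + unit_index i k) \<epsilon> * cauchy_product p q \<gamma>)"
    by (simp add: pow_coeff_add p(4) unit fun_eq_iff cauchy_product_scale)
  moreover have "infsum (cauchy_product p q) UNIV = 1"
    using infsum_cauchy_product[OF p(2) Aplus_rep_abs_summable[OF rep]] p(3) normalised[of i]
    by (simp add: Aplus_ext_def series_eval_one q_def)
  ultimately show ?case
    using p(1) nonneg abs_summable_cauchy_product[OF p(2) Aplus_rep_abs_summable[OF rep]]
    by (intro exI[of _ "cauchy_product p q"]) (auto intro: cauchy_product_nonneg simp: q_def)
qed

lemma norm_pow_coeff_eq_1: "infsum (\<lambda>\<gamma>. norm (pow_coeff \<alpha> \<gamma>)) UNIV = 1"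
proof -
  obtain p where p: "\<forall>\<gamma>. 0 \<le> p \<gamma>" "abs_summable p" "infsum p UNIV = 1"
      "pow_coeff \<alpha> = (\<lambda>\<gamma>. monom \<alpha> \<epsilon> * p \<gamma>)"
    using pow_coeff_eq_unimodular_times_nonneg by blast
  have "norm (monom \<alpha> \<epsilon>) = 1" by (simp add: norm_monom unimodular)
  then have "infsum (\<lambda>\<gamma>. norm (pow_coeff \<alpha> \<gamma>)) UNIV = infsum (\<lambda>\<gamma>. norm (p \<gamma>)) UNIV"
    by (simp add: p(4) norm_mult)
  also have "\<dots> = norm (infsum p UNIV)"
    using p(1) abs_summable_summable[OF p(2)] by (intro infsum_cmod) auto
  finally show ?thesis using p(3) by simp
qed

end

definition comp_coeffs :: "(('n \<Rightarrow> nat) \<Rightarrow> complex) \<Rightarrow> ('n \<Rightarrow> nat) \<Rightarrow> complex" where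
  "comp_coeffs c \<gamma> = infsum (\<lambda>\<alpha>. c \<alpha> * pow_coeff \<alpha> \<gamma>) UNIV"

lemma summable_weighted_pow_coeff:
  assumes norm1: "\<And>\<alpha>. infsum (\<lambda>\<gamma>. norm (pow_coeff \<alpha> \<gamma>)) UNIV = 1" and c: "abs_summable c"
  shows "(\<lambda>(\<alpha>, \<gamma>). norm (c \<alpha>) * norm (pow_coeff \<alpha> \<gamma>)) summable_on UNIV \<times> UNIV"
proof -
  have "(\<lambda>p. norm ((\<lambda>(\<alpha>, \<gamma>). norm (c \<alpha>) * norm (pow_coeff \<alpha> \<gamma>)) p)) summable_on Sigma UNIV (\<lambda>_. UNIV)"
  proof (rule Infinite_Sum.abs_summable_on_Sigma_iff[THEN iffD2], intro conjI ballI)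
    show "(\<lambda>\<gamma>. norm ((\<lambda>(\<alpha>, \<gamma>). norm (c \<alpha>) * norm (pow_coeff \<alpha> \<gamma>)) (\<alpha>, \<gamma>))) summable_on UNIV" for \<alpha>
      using summable_on_cmult_right[OF abs_summable_pow_coeff[of \<alpha>], of "norm (c \<alpha>)"] by simp
    have "(\<lambda>\<alpha>. norm (infsum (\<lambda>\<gamma>. norm ((\<lambda>(\<alpha>, \<gamma>). norm (c \<alpha>) * norm (pow_coeff \<alpha> \<gamma>)) (\<alpha>, \<gamma>))) UNIV))
        = (\<lambda>\<alpha>. norm (c \<alpha>))"
      by (simp add: infsum_cmult_right' norm1)
    then show "(\<lambda>\<alpha>. norm (infsum (\<lambda>\<gamma>. norm ((\<lambda>(\<alpha>, \<gamma>). norm (c \<alpha>) * norm (pow_coeff \<alpha> \<gamma>)) (\<alpha>, \<gamma>))) UNIV))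
        summable_on UNIV"
      using c by simp
  qed
  then show ?thesis by (simp add: case_prod_unfold)
qed

context
  assumes norm1: "\<And>\<alpha>. infsum (\<lambda>\<gamma>. norm (pow_coeff \<alpha> \<gamma>)) UNIV = 1"
    and disjoint: "\<And>\<alpha> \<alpha>' \<gamma>. \<alpha> \<noteq> \<alpha>' \<Longrightarrow> pow_coeff \<alpha> \<gamma> = 0 \<or> pow_coeff \<alpha>' \<gamma> = 0"
begin

text \<open>Disjointness of the spectra means that each \<open>\<gamma>\<close> occurs in at most one \<open>\<phi>\<^sup>\<alpha>\<close>, so no
  cancellation happens in \<open>f \<circ> \<phi> = \<Sum>\<^sub>\<alpha> c\<^sub>\<alpha> \<phi>\<^sup>\<alpha>\<close>.\<close>

lemma norm_comp_coeffs:
  "norm (comp_coeffs c \<gamma>) = infsum (\<lambda>\<alpha>. norm (c \<alpha>) * norm (pow_coeff \<alpha> \<gamma>)) UNIV"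
proof -
  obtain \<alpha>0 where only: "\<And>\<alpha>. \<alpha> \<noteq> \<alpha>0 \<Longrightarrow> pow_coeff \<alpha> \<gamma> = 0"
    using disjoint by metis
  have "comp_coeffs c \<gamma> = c \<alpha>0 * pow_coeff \<alpha>0 \<gamma>"
    unfolding comp_coeffs_def by (rule infsum_eq_single) (simp add: only)
  moreover have "infsum (\<lambda>\<alpha>. norm (c \<alpha>) * norm (pow_coeff \<alpha> \<gamma>)) UNIV = norm (c \<alpha>0) * norm (pow_coeff \<alpha>0 \<gamma>)"
    by (rule infsum_eq_single) (simp add: only)
  ultimately show ?thesis by (simp add: norm_mult)
qed

lemma
  assumes c: "abs_summable c"
  shows abs_summable_comp_coeffs: "abs_summable (comp_coeffs c)"
    and infsum_norm_comp_coeffs: "infsum (\<lambda>\<gamma>. norm (comp_coeffs c \<gamma>)) UNIV = infsum (\<lambda>\<alpha>. norm (c \<alpha>)) UNIV"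
proof -
  have W: "(\<lambda>(\<alpha>, \<gamma>). norm (c \<alpha>) * norm (pow_coeff \<alpha> \<gamma>)) summable_on UNIV \<times> UNIV"
    by (rule summable_weighted_pow_coeff[OF norm1 c])
  have "(\<lambda>(\<gamma>, \<alpha>). norm (c \<alpha>) * norm (pow_coeff \<alpha> \<gamma>)) summable_on UNIV \<times> UNIV"
    using summable_on_swap[of "\<lambda>(\<alpha>, \<gamma>). norm (c \<alpha>) * norm (pow_coeff \<alpha> \<gamma>)" UNIV UNIV] W
    by (simp add: case_prod_unfold)
  then show "abs_summable (comp_coeffs c)"
    using summable_on_Sigma_banach[of "\<lambda>\<gamma> \<alpha>. norm (c \<alpha>) * norm (pow_coeff \<alpha> \<gamma>)" UNIV "\<lambda>_. UNIV"]
    by (simp add: norm_comp_coeffs)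
  have "infsum (\<lambda>\<gamma>. norm (comp_coeffs c \<gamma>)) UNIV
      = infsum (\<lambda>\<gamma>. infsum (\<lambda>\<alpha>. norm (c \<alpha>) * norm (pow_coeff \<alpha> \<gamma>)) UNIV) UNIV"
    by (simp add: norm_comp_coeffs)
  also have "\<dots> = infsum (\<lambda>\<alpha>. infsum (\<lambda>\<gamma>. norm (c \<alpha>) * norm (pow_coeff \<alpha> \<gamma>)) UNIV) UNIV"
    using W by (intro infsum_swap_banach[symmetric]) simp
  also have "\<dots> = infsum (\<lambda>\<alpha>. norm (c \<alpha>)) UNIV"
    by (simp add: infsum_cmult_right' norm1)
  finally show "infsum (\<lambda>\<gamma>. norm (comp_coeffs c \<gamma>)) UNIV = infsum (\<lambda>\<alpha>. norm (c \<alpha>)) UNIV" .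
qed

lemma series_eval_comp_coeffs:
  assumes rep: "Aplus_rep f c" and z: "z \<in> polydisc"
  shows "comp_op \<phi> f z = series_eval (comp_coeffs c) z"
proof -
  have W: "(\<lambda>(\<alpha>, \<gamma>). norm (c \<alpha>) * norm (pow_coeff \<alpha> \<gamma>)) summable_on UNIV \<times> UNIV"
    by (rule summable_weighted_pow_coeff[OF norm1 Aplus_rep_abs_summable[OF rep]])
  have "comp_op \<phi> f z = infsum (\<lambda>\<alpha>. c \<alpha> * monom \<alpha> (\<lambda>i. \<phi> i z)) UNIV"
    by (simp add: comp_op_def Aplus_ext_def Aplus_coeff_eq[OF rep] series_eval_def)
  also have "\<dots> = infsum (\<lambda>\<alpha>. infsum (\<lambda>\<gamma>. c \<alpha> * pow_coeff \<alpha> \<gamma> * monom \<gamma> z) UNIV) UNIV"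
    using z by (simp add: series_eval_pow_coeff[symmetric] series_eval_def mult.assoc
        flip: infsum_cmult_right')
  also have "\<dots> = infsum (\<lambda>\<gamma>. infsum (\<lambda>\<alpha>. c \<alpha> * pow_coeff \<alpha> \<gamma> * monom \<gamma> z) UNIV) UNIV"
  proof (rule infsum_swap_banach, rule abs_summable_summable)
    show "(\<lambda>p. norm ((\<lambda>(\<alpha>, \<gamma>). c \<alpha> * pow_coeff \<alpha> \<gamma> * monom \<gamma> z) p)) summable_on UNIV \<times> UNIV"
      using norm_monom_le_1[OF polydisc_imp_closed_polydisc[OF z]]
      by (intro Infinite_Sum.abs_summable_on_comparison_test'[OF W])
         (auto simp: norm_mult mult_left_le)
  qed
  also have "\<dots> = series_eval (comp_coeffs c) z"
    by (simp add: series_eval_def comp_coeffs_def infsum_cmult_left')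
  finally show ?thesis .
qed

lemma Aplus_norm_comp_op: "in_Aplus f \<Longrightarrow> Aplus_norm (comp_op \<phi> f) = Aplus_norm f"
  unfolding in_Aplus_def
proof (elim exE)
  fix c assume rep: "Aplus_rep f c"
  then have "Aplus_rep (comp_op \<phi> f) (comp_coeffs c)"
    using abs_summable_comp_coeffs series_eval_comp_coeffs by (simp add: Aplus_rep_def)
  then show "Aplus_norm (comp_op \<phi> f) = Aplus_norm f"
    using Aplus_norm_eq[OF rep] infsum_norm_comp_coeffs[OF Aplus_rep_abs_summable[OF rep]]
    by (simp add: Aplus_norm_eq)
qed

end

lemma isometric_if_conditions:
  assumes "\<forall>i. \<exists>\<epsilon> F. norm \<epsilon> = 1 \<and> in_Aplus F
          \<and> (\<forall>\<beta>. Im (Aplus_coeff F \<beta>) = 0 \<and> Re (Aplus_coeff F \<beta>) \<ge> 0)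
          \<and> (\<forall>z\<in>polydisc. \<phi> i z = \<epsilon> * F z)
          \<and> Aplus_ext F (\<lambda>_. 1) = 1
          \<and> (SUP z\<in>polydisc. norm (F z)) = 1"
    and "\<forall>\<alpha> \<alpha>'. \<alpha> \<noteq> \<alpha>' \<longrightarrow>
          spectrum_Aplus (\<lambda>z. monom \<alpha> (\<lambda>i. \<phi> i z)) \<inter>
          spectrum_Aplus (\<lambda>z. monom \<alpha>' (\<lambda>i. \<phi> i z)) = {}"
  shows "\<forall>f. in_Aplus f \<longrightarrow> Aplus_norm (comp_op \<phi> f) = Aplus_norm f"
proof -
  obtain \<epsilon> F where "\<And>i. norm (\<epsilon> i) = 1" "\<And>i. in_Aplus (F i)" "\<And>i \<beta>. 0 \<le> Aplus_coeff (F i) \<beta>"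
    "\<And>i z. z \<in> polydisc \<Longrightarrow> \<phi> i z = \<epsilon> i * F i z" "\<And>i. Aplus_ext (F i) (\<lambda>_. 1) = 1"
    using assms(1) unfolding less_eq_complex_def by (metis zero_complex.sel)
  then have "infsum (\<lambda>\<gamma>. norm (pow_coeff \<alpha> \<gamma>)) UNIV = 1" for \<alpha>
    by (intro norm_pow_coeff_eq_1[of \<epsilon> F]) blast+
  then show ?thesis
    using Aplus_norm_comp_op assms(2) spectra_disjoint_iff by blast
qed

end

theorem lemma18:
  fixes \<phi> :: "'n::finite \<Rightarrow> ('n \<Rightarrow> complex) \<Rightarrow> complex"
  assumes analytic: "\<And>i. analytic_polydisc (\<phi> i)"
    and maps_into: "\<And>z i. z \<in> polydisc \<Longrightarrow> norm (\<phi> i z) \<le> 1"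
    and bounded_op: "\<And>f. in_Aplus f \<Longrightarrow> in_Aplus (comp_op \<phi> f)"
  shows "(\<forall>f. in_Aplus f \<longrightarrow> Aplus_norm (comp_op \<phi> f) = Aplus_norm f) \<longleftrightarrow>
    ((\<forall>i. \<exists>\<epsilon> F. norm \<epsilon> = 1 \<and> in_Aplus F
          \<and> (\<forall>\<beta>. Im (Aplus_coeff F \<beta>) = 0 \<and> Re (Aplus_coeff F \<beta>) \<ge> 0)
          \<and> (\<forall>z\<in>polydisc. \<phi> i z = \<epsilon> * F z)
          \<and> Aplus_ext F (\<lambda>_. 1) = 1
          \<and> (SUP z\<in>polydisc. norm (F z)) = 1)
     \<and> (\<forall>\<alpha> \<alpha>'. \<alpha> \<noteq> \<alpha>' \<longrightarrow>
          spectrum_Aplus (\<lambda>z. monom \<alpha> (\<lambda>i. \<phi> i z)) \<inter>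
          spectrum_Aplus (\<lambda>z. monom \<alpha>' (\<lambda>i. \<phi> i z)) = {}))"
proof -
  interpret Aplus_composition \<phi>
    using bounded_op by unfold_locales
  have "Aplus_isometric_composition \<phi>" if "\<forall>f. in_Aplus f \<longrightarrow> Aplus_norm (comp_op \<phi> f) = Aplus_norm f"
    using bounded_op that by unfold_locales auto
  then show ?thesis
    using Aplus_isometric_composition.conditions_if_isometric isometric_if_conditions by blast
qed

end
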